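(* In $M_q(\mathfrak{g})$, for all $1\le i,j\le m$: $$\Delta(\Gamma^j)=\chi_j\otimes\Gamma^j+\Gamma^j\otimes1,\qquad(\chi_i\cdot\Gamma^j)\cdot\chi_i^{-1}=\mathfrak{q}^{c_{ji}}q^{-c_{ji}}\Gamma^j.$$
   Context: Notation and setting. $\mathbb{k}$ is an algebraically closed field of characteristic $0$. $(a_{ij})$ is an $m\times m$ Cartan matrix of finite type, and $d_i\in\{1,2,3\}$ are such that $c_{ij}=d_ia_{ij}$ is symmetric. $n\ge2$, $q$ is a primitive $n^2$-th root of unity in $\mathbb{k}$, $\mathfrak{q}=q^n$, and $l_i=\mathrm{ord}(q^{c_{ii}})$. $\lfloor\cdot\rfloor$ is the floor function, and $a\in(\mathbb{Z}_n)^m$ has entries in $\{0,\dots,n-1\}$. $A_q(\mathfrak{g})$ is the half small quasi-quantum group of Etingof–Gelaki (defined with the symmetrized matrix $(c_{ij})$). It is the subalgebra generated by $h_i=g_i^n$ and $e_i$ of the Hopf algebra $H$ generated by commuting grouplikes $g_i$ with $g_i^{n^2}=1$ and elements $e_i$ with $g_ie_jg_i^{-1}=q^{\delta_{ij}}e_j$, $e_i^{l_i}=0$, the quantum Serre relations, and $\Delta(e_i)=e_i\otimes\prod_jg_j^{c_{ij}}+1\otimes e_i$; the quasi-Hopf structure is inherited from a twist of $H$. Let $1_a$ ($a\in(\mathbb{Z}_n)^m$) be the idempotents of $\mathbb{k}\langle h_i\rangle$ with $1_ah_i=\mathfrak{q}^{a_i}1_a$, $1^i_k=\frac1n\sum_j\mathfrak{q}^{-kj}h_i^j$,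 $b_i=\sum_a\prod_jq^{-c_{ij}a_j}1_a$, and $H_i=\prod_jh_j^{c_{ij}}$. The quasi-Hopf structure of $A_q(\mathfrak{g})$ has: - $\Delta(h_i)=h_i\otimes h_i$; - $\Delta(e_i)=e_i\otimes b_i^{-1}+1\otimes\sum_{j=1}^{n-1}1^i_je_i+H_i^{-1}\otimes1^i_0e_i$; - reassociator $\phi=\sum_{a,b,c}\prod_{i,j}\mathfrak{q}^{-c_{ij}a_i\lfloor\frac{b_j+c_j}{n}\rfloor}1_a\otimes1_b\otimes1_c$. $M_q(\mathfrak{g})$ is the dual Majid (dual quasi-Hopf) algebra $A_q(\mathfrak{g})^*$: - its coalgebra structure is dual to the algebra structure of $A_q(\mathfrak{g})$; - its product is $(f\cdot g)(x)=\sum f(x_{(1)})g(x_{(2)})$, and its unit is $1=\varepsilon$; - its reassociator is the functional $\Phi(f\otimes g\otimes h)=(f\otimes g\otimes h)(\phi)$. Fix a basis of $A_q(\mathfrak{g})$ of homogeneous elements (grading $\deg h_i=0$, $\deg e_i=1$) containing all $1_a$ and all $1_ae_i$, and let $x^*$ denote dual basis elements. Set $\chi_i=(1_{\epsilon_i})^*$, which is the algebra character with $\chi_i(h_j)=\mathfrak{q}^{\delta_{ij}}$ and $\chi_i(e_j)=0$; set $\Gamma^i=(1_{\epsilon_i}e_i)^*$. *)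

theory Defs
  imports Main "HOL-Computational_Algebra.Polynomial"
begin

definition alg_closed :: "'k::field itself \<Rightarrow> bool" where
  "alg_closed _ \<longleftrightarrow> (\<forall>p::'k poly. degree p > 0 \<longrightarrow> (\<exists>x. poly p x = 0))"

definition primitive_root :: "nat \<Rightarrow> 'k::field \<Rightarrow> bool" where
  "primitive_root N x \<longleftrightarrow> x ^ N = 1 \<and> (\<forall>k. 0 < k \<and> k < N \<longrightarrow> x ^ k \<noteq> 1)"

definition ord_k :: "'k::field \<Rightarrow> nat" where
  "ord_k x = (LEAST k. 0 < k \<and> x ^ k = 1)"

definition cartan_finite_type :: "nat \<Rightarrow> (nat \<Rightarrow> nat \<Rightarrow> int) \<Rightarrow> (nat \<Rightarrow> int) \<Rightarrow> bool" where
  "cartan_finite_type m a d \<longleftrightarrow>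
     (\<forall>i<m. a i i = 2) \<and>
     (\<forall>i<m. \<forall>j<m. i \<noteq> j \<longrightarrow> a i j \<le> 0) \<and>
     (\<forall>i<m. \<forall>j<m. a i j = 0 \<longleftrightarrow> a j i = 0) \<and>
     (\<forall>i<m. d i \<in> {1,2,3}) \<and>
     (\<forall>i<m. \<forall>j<m. d i * a i j = d j * a j i) \<and>
     (\<forall>x::nat \<Rightarrow> real. (\<exists>i<m. x i \<noteq> 0) \<longrightarrow>
        (\<Sum>i<m. \<Sum>j<m. of_int (d i * a i j) * x i * x j) > 0)"

section \<open>Index set (Z_n)^m with representatives in {0..n-1}\<close>

definition idx :: "nat \<Rightarrow> nat \<Rightarrow> (nat \<Rightarrow> nat) set" where
  "idx m n = {a. (\<forall>j<m. a j < n) \<and> (\<forall>j\<ge>m. a j = 0)}"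

text \<open>The unit vector epsilon_i and the representative of -epsilon_i in {0..n-1}^m.\<close>
definition unitv :: "nat \<Rightarrow> nat \<Rightarrow> nat" where
  "unitv i = (\<lambda>j. if j = i then 1 else 0)"

definition neg_unitv :: "nat \<Rightarrow> nat \<Rightarrow> nat \<Rightarrow> nat" where
  "neg_unitv n i = (\<lambda>j. if j = i then n - 1 else 0)"

definition kalgebra :: "('k::field \<Rightarrow> 'a::ring_1 \<Rightarrow> 'a) \<Rightarrow> bool" where
  "kalgebra scale \<longleftrightarrow> vector_space scale \<and>
     (\<forall>c x y. scale c (x * y) = scale c x * y) \<and>
     (\<forall>c x y. scale c (x * y) = x * scale c y)"

definition one_ik :: "('k::field \<Rightarrow> 'a::ring_1 \<Rightarrow> 'a) \<Rightarrow> nat \<Rightarrow> 'k \<Rightarrow> (nat \<Rightarrow> 'a) \<Rightarrow> nat \<Rightarrow> nat \<Rightarrow> 'a" where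
  "one_ik scale n q h i k =
     scale (1 / of_nat n) (\<Sum>t<n. scale ((q ^ n) powi (- (int k * int t))) (h i ^ t))"

definition one_a :: "('k::field \<Rightarrow> 'a::ring_1 \<Rightarrow> 'a) \<Rightarrow> nat \<Rightarrow> nat \<Rightarrow> 'k \<Rightarrow> (nat \<Rightarrow> 'a) \<Rightarrow> (nat \<Rightarrow> nat) \<Rightarrow> 'a" where
  "one_a scale m n q h a = prod_list (map (\<lambda>i. one_ik scale n q h i (a i)) [0..<m])"

text \<open>b_i^{-1} = sum_a prod_j q^(c_ij a_j) 1_a  (inverse of b_i = sum_a prod_j q^(-c_ij a_j) 1_a).\<close>
definition b_inv :: "('k::field \<Rightarrow> 'a::ring_1 \<Rightarrow> 'a) \<Rightarrow> nat \<Rightarrow> nat \<Rightarrow> 'k \<Rightarrow> (nat \<Rightarrow> nat \<Rightarrow> int) \<Rightarrow> (nat \<Rightarrow> 'a) \<Rightarrow> nat \<Rightarrow> 'a" where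
  "b_inv scale m n q c h i =
     (\<Sum>a\<in>idx m n. scale (\<Prod>j<m. q powi (c i j * int (a j))) (one_a scale m n q h a))"

text \<open>H_i^{-1} = prod_j h_j^(-c_ij), computed using h_j^n = 1.\<close>
definition H_inv :: "nat \<Rightarrow> nat \<Rightarrow> (nat \<Rightarrow> nat \<Rightarrow> int) \<Rightarrow> (nat \<Rightarrow> 'a::ring_1) \<Rightarrow> nat \<Rightarrow> 'a" where
  "H_inv m n c h i = prod_list (map (\<lambda>j. h j ^ nat ((- c i j) mod int n)) [0..<m])"

definition graded :: "('k::field \<Rightarrow> 'a::ring_1 \<Rightarrow> 'a) \<Rightarrow> (nat \<Rightarrow> 'a set) \<Rightarrow> bool" where
  "graded scale G \<longleftrightarrow>
     (\<forall>d. module.subspace scale (G d)) \<and>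
     (\<forall>d d' x y. x \<in> G d \<longrightarrow> y \<in> G d' \<longrightarrow> x * y \<in> G (d + d')) \<and>
     module.span scale (\<Union>d. G d) = UNIV \<and>
     (\<forall>N x. (\<forall>d<N. x d \<in> G d) \<longrightarrow> (\<Sum>d<N. x d) = 0 \<longrightarrow> (\<forall>d<N. x d = 0))"

inductive_set gen_alg :: "('k::field \<Rightarrow> 'a::ring_1 \<Rightarrow> 'a) \<Rightarrow> nat \<Rightarrow> (nat \<Rightarrow> 'a) \<Rightarrow> (nat \<Rightarrow> 'a) \<Rightarrow> 'a set"
  for scale m h e where
    "1 \<in> gen_alg scale m h e"
  | "i < m \<Longrightarrow> h i \<in> gen_alg scale m h e"
  | "i < m \<Longrightarrow> e i \<in> gen_alg scale m h e"
  | "x \<in> gen_alg scale m h e \<Longrightarrow> y \<in> gen_alg scale m h e \<Longrightarrow> x + y \<in> gen_alg scale m h e"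
  | "x \<in> gen_alg scale m h e \<Longrightarrow> y \<in> gen_alg scale m h e \<Longrightarrow> x * y \<in> gen_alg scale m h e"
  | "x \<in> gen_alg scale m h e \<Longrightarrow> scale c x \<in> gen_alg scale m h e"

definition lin_fun :: "('k::field \<Rightarrow> 'a::ring_1 \<Rightarrow> 'a) \<Rightarrow> ('a \<Rightarrow> 'k) \<Rightarrow> bool" where
  "lin_fun scale f \<longleftrightarrow> Vector_Spaces.linear scale ((*) :: 'k \<Rightarrow> 'k \<Rightarrow> 'k) f"

text \<open>An element of A (x) A is represented by a list of pairs (sum of pure tensors);
  two representatives denote the same tensor iff they pair equally with all f (x) g.\<close>
definition pair_tensor :: "('a \<Rightarrow> 'k::field) \<Rightarrow> ('a \<Rightarrow> 'k) \<Rightarrow> ('a \<times> 'a) list \<Rightarrow> 'k" where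
  "pair_tensor f g xs = sum_list (map (\<lambda>(u, v). f u * g v) xs)"

definition teq :: "('k::field \<Rightarrow> 'a::ring_1 \<Rightarrow> 'a) \<Rightarrow> ('a \<times> 'a) list \<Rightarrow> ('a \<times> 'a) list \<Rightarrow> bool" where
  "teq scale xs ys \<longleftrightarrow> (\<forall>f g. lin_fun scale f \<longrightarrow> lin_fun scale g \<longrightarrow>
      pair_tensor f g xs = pair_tensor f g ys)"

definition tmult :: "('a::ring_1 \<times> 'a) list \<Rightarrow> ('a \<times> 'a) list \<Rightarrow> ('a \<times> 'a) list" where
  "tmult xs ys = concat (map (\<lambda>(u, v). map (\<lambda>(u', v'). (u * u', v * v')) ys) xs)"

definition Aq_coproduct ::
  "('k::field \<Rightarrow> 'a::ring_1 \<Rightarrow> 'a) \<Rightarrow> nat \<Rightarrow> nat \<Rightarrow> 'k \<Rightarrow> (nat \<Rightarrow> nat \<Rightarrow> int) \<Rightarrow>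
   (nat \<Rightarrow> 'a) \<Rightarrow> (nat \<Rightarrow> 'a) \<Rightarrow> ('a \<Rightarrow> ('a \<times> 'a) list) \<Rightarrow> bool" where
  "Aq_coproduct scale m n q c h e Dl \<longleftrightarrow>
     (\<forall>x y. teq scale (Dl (x + y)) (Dl x @ Dl y)) \<and>
     (\<forall>k x. teq scale (Dl (scale k x)) (map (\<lambda>(u, v). (scale k u, v)) (Dl x))) \<and>
     (\<forall>x y. teq scale (Dl (x * y)) (tmult (Dl x) (Dl y))) \<and>
     teq scale (Dl 1) [(1, 1)] \<and>
     (\<forall>i<m. teq scale (Dl (h i)) [(h i, h i)]) \<and>
     (\<forall>i<m. teq scale (Dl (e i))
        [(e i, b_inv scale m n q c h i),
         (1, (\<Sum>t\<in>{1..n-1}. one_ik scale n q h i t) * e i),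
         (H_inv m n c h i, one_ik scale n q h i 0 * e i)])"

section \<open>The dual algebra M_q(g) = A_q(g)^*\<close>

text \<open>Product of M: (f . g)(x) = sum f(x_(1)) g(x_(2)).\<close>
definition conv :: "('a \<Rightarrow> ('a \<times> 'a) list) \<Rightarrow> ('a \<Rightarrow> 'k::field) \<Rightarrow> ('a \<Rightarrow> 'k) \<Rightarrow> 'a \<Rightarrow> 'k" where
  "conv Dl f g x = pair_tensor f g (Dl x)"

text \<open>Coproduct of M, dual to the multiplication of A, as an element of (A (x) A)^* = M (x) M.\<close>
definition dual_coprod :: "('a::ring_1 \<Rightarrow> 'k) \<Rightarrow> 'a \<times> 'a \<Rightarrow> 'k" where
  "dual_coprod f = (\<lambda>(x, y). f (x * y))"

text \<open>Pure tensor f (x) g of M (x) M, viewed as the functional x (x) y |-> f x * g y.\<close>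
definition ftensor :: "('a \<Rightarrow> 'k::field) \<Rightarrow> ('a \<Rightarrow> 'k) \<Rightarrow> 'a \<times> 'a \<Rightarrow> 'k" where
  "ftensor f g = (\<lambda>(x, y). f x * g y)"

definition dual_basis :: "('k::field \<Rightarrow> 'a::ring_1 \<Rightarrow> 'a) \<Rightarrow> 'a set \<Rightarrow> 'a \<Rightarrow> 'a \<Rightarrow> 'k" where
  "dual_basis scale B b = (\<lambda>v. module.representation scale B v b)"

end

theory Submission
  imports Defs
begin

text \<open>The dual functionals \<open>chi w = (1_w)\<^sup>*\<close> of the degree-0 idempotents are characters of
  \<open>A_q(g)\<close> that multiply like the group \<open>(Z_n)\<^sup>m\<close> under convolution, so conjugation by
  \<open>chi_i\<close> fixes every \<open>chi w\<close>, in particular \<open>chi_j\<close> and \<open>eps = chi 0\<close>. The functional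
  \<open>Gamma_j = (1_{eps_j} e_j)\<^sup>*\<close> satisfies \<open>Gamma_j(xy) = chi_j(x) Gamma_j(y) + Gamma_j(x) eps(y)\<close>,
  which is the first formula; to compute its values one needs that the 1_a and the 1_a e_i are
  all basis vectors of degree 0 and 1, which follows by splitting every element into
  components of degree 0, 1 and at least 2. Convolving such a skew derivation with characters
  on both sides gives again a skew derivation, and \<open>chi_i Gamma_j chi_i\<^sup>-\<^sup>1\<close> and
  \<open>Gamma_j\<close> are both \<open>(chi_j, eps)\<close>-skew derivations; such maps are determined by their values
  on the generators, and on \<open>e_j\<close> the coproduct formula produces the factor
  \<open>chi_{-eps_i}(b_j\<^sup>-\<^sup>1) = qq^(c_ji) q^(-c_ji)\<close>.\<close>

section \<open>Roots of unity\<close>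

context
  fixes n :: nat and z :: "'k::field"
  assumes n_pos: "0 < n" and z_prim: "primitive_root n z"
begin

lemma primitive_root_nonzero: "z \<noteq> 0"
  using n_pos z_prim by (auto simp: primitive_root_def zero_power)

lemma primitive_root_powi_mod: "z powi w = z ^ nat (w mod int n)"
proof -
  have "z powi w = z powi (w mod int n + int n * (w div int n))" by simp
  also have "\<dots> = z powi (w mod int n) * (z ^ n) powi (w div int n)"
    by (subst power_int_add) (simp_all add: power_int_power primitive_root_nonzero)
  also have "\<dots> = z ^ nat (w mod int n)"
    using n_pos z_prim by (simp add: primitive_root_def power_int_def)
  finally show ?thesis .
qed

lemma primitive_root_powi_eq_1_iff: "z powi w = 1 \<longleftrightarrow> int n dvd w"
proof -
  have "nat (w mod int n) < n" using n_pos by (simp add: nat_less_iff)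
  then have "z ^ nat (w mod int n) = 1 \<longleftrightarrow> nat (w mod int n) = 0"
    using z_prim unfolding primitive_root_def by (metis gr0I power_0)
  moreover have "w mod int n \<ge> 0" using n_pos by simp
  ultimately show ?thesis
    by (simp add: primitive_root_powi_mod dvd_eq_mod_eq_0)
qed

lemma primitive_root_powi_eq_iff: "z powi x = z powi y \<longleftrightarrow> int n dvd (x - y)"
proof -
  have "z powi x = z powi y \<longleftrightarrow> z powi (x - y) = 1"
    using primitive_root_nonzero by (auto simp: power_int_diff)
  then show ?thesis by (simp add: primitive_root_powi_eq_1_iff)
qed

lemma primitive_root_geometric_sum:
  "(\<Sum>s<n. (z powi w) ^ s) = (if int n dvd w then of_nat n else 0)"
proof (cases "int n dvd w")
  case False
  then have "z powi w \<noteq> 1" by (simp add: primitive_root_powi_eq_1_iff)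
  moreover have "(z powi w) ^ n = (z ^ n) powi w"
    by (simp add: power_int_power' power_int_power mult.commute)
  then have "(z powi w) ^ n = 1" using z_prim by (simp add: primitive_root_def)
  ultimately show ?thesis using False by (simp add: geometric_sum)
qed (simp add: primitive_root_powi_eq_1_iff[symmetric])

end

lemma primitive_root_power:
  assumes "0 < k" "primitive_root (k * n) x"
  shows "primitive_root n (x ^ k)"
  using assms by (auto simp: primitive_root_def simp flip: power_mult)


section \<open>Linear functionals on an algebra\<close>

locale k_algebra =
  fixes scale :: "'k::field \<Rightarrow> 'a::ring_1 \<Rightarrow> 'a"
  assumes kalgebra: "kalgebra scale"
begin

sublocale V: vector_space scale
  using kalgebra by (simp add: kalgebra_def)

lemma scale_mult_left: "scale k x * y = scale k (x * y)"
  using kalgebra by (simp add: kalgebra_def)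

lemma scale_mult_right: "x * scale k y = scale k (x * y)"
  using kalgebra unfolding kalgebra_def by metis

lemma lin_funI:
  assumes "\<And>x y. f (x + y) = f x + f y" "\<And>k x. f (scale k x) = k * f x"
  shows "lin_fun scale f"
proof -
  have "vector_space ((*) :: 'k \<Rightarrow> 'k \<Rightarrow> 'k)"
    by unfold_locales (auto simp: algebra_simps)
  then show ?thesis
    using assms V.vector_space_axioms unfolding lin_fun_def Vector_Spaces.linear_iff by auto
qed

lemma lin_fun_add: "lin_fun scale f \<Longrightarrow> f (x + y) = f x + f y"
  unfolding lin_fun_def Vector_Spaces.linear_iff by auto

lemma lin_fun_scale: "lin_fun scale f \<Longrightarrow> f (scale k x) = k * f x"
  unfolding lin_fun_def Vector_Spaces.linear_iff by auto

lemma lin_fun_zero: "lin_fun scale f \<Longrightarrow> f 0 = 0"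
  using lin_fun_scale[of f 0 0] by simp

lemma lin_fun_sum: "lin_fun scale f \<Longrightarrow> f (\<Sum>i\<in>I. g i) = (\<Sum>i\<in>I. f (g i))"
  by (induction I rule: infinite_finite_induct) (auto simp: lin_fun_zero lin_fun_add)

lemma lin_fun_diff: "lin_fun scale f \<Longrightarrow> f (x - y) = f x - f y"
  using lin_fun_add[of f "x - y" y] by simp

lemma lin_fun_mult_left: "lin_fun scale f \<Longrightarrow> lin_fun scale (\<lambda>y. f (x * y))"
  by (rule lin_funI) (simp_all add: distrib_left scale_mult_right lin_fun_add lin_fun_scale)

lemma lin_fun_cmult: "lin_fun scale f \<Longrightarrow> lin_fun scale (\<lambda>y. k * f y)"
  by (rule lin_funI) (simp_all add: lin_fun_add lin_fun_scale algebra_simps)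

lemma span_mult:
  assumes x: "x \<in> V.span X" and y: "y \<in> V.span Y"
    and XY: "\<And>x y. x \<in> X \<Longrightarrow> y \<in> Y \<Longrightarrow> x * y \<in> V.span Z"
  shows "x * y \<in> V.span Z"
proof -
  have "\<forall>y\<in>V.span Y. x' * y \<in> V.span Z" if "x' \<in> X" for x'
  proof
    fix y assume "y \<in> V.span Y"
    then show "x' * y \<in> V.span Z"
    proof (induction rule: V.span_induct)
      case base show ?case
        unfolding V.subspace_def
        by (auto simp: distrib_left scale_mult_right V.span_zero V.span_add V.span_scale)
    qed (use XY that in simp)
  qed
  moreover from x have "(\<forall>x'\<in>X. \<forall>y\<in>V.span Y. x' * y \<in> V.span Z) \<longrightarrow> (\<forall>y\<in>V.span Y. x * y \<in> V.span Z)"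
  proof (induction rule: V.span_induct)
    case base show ?case
      unfolding V.subspace_def
      by (auto simp: distrib_right scale_mult_left V.span_zero V.span_add V.span_scale)
  qed simp
  ultimately show ?thesis using y by blast
qed

definition character :: "('a \<Rightarrow> 'k) \<Rightarrow> bool" where
  "character f \<longleftrightarrow> lin_fun scale f \<and> (\<forall>x y. f (x * y) = f x * f y) \<and> f 1 = 1"

text \<open>The functional form of a coproduct \<open>Delta(D) = p \<otimes> D + D \<otimes> s\<close> in the dual algebra.\<close>
definition skew_derivation :: "('a \<Rightarrow> 'k) \<Rightarrow> ('a \<Rightarrow> 'k) \<Rightarrow> ('a \<Rightarrow> 'k) \<Rightarrow> bool" where
  "skew_derivation p s D \<longleftrightarrow> lin_fun scale D \<and> (\<forall>x y. D (x * y) = p x * D y + D x * s y)"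

lemma character_lin_fun: "character f \<Longrightarrow> lin_fun scale f"
  by (simp add: character_def)

lemma skew_derivation_one: "skew_derivation p s D \<Longrightarrow> p 1 = 1 \<Longrightarrow> s 1 = 1 \<Longrightarrow> D 1 = 0"
  unfolding skew_derivation_def by (metis add_cancel_left_left mult_1 mult_1_right)

lemma skew_derivation_cmult: "skew_derivation p s D \<Longrightarrow> skew_derivation p s (\<lambda>x. k * D x)"
  by (auto simp: skew_derivation_def lin_fun_cmult algebra_simps)

end


section \<open>Graded algebras with a homogeneous basis\<close>

locale graded_basis = k_algebra scale for scale :: "'k::field \<Rightarrow> 'a::ring_1 \<Rightarrow> 'a" +
  fixes G :: "nat \<Rightarrow> 'a set" and B :: "'a set"
  assumes grading: "graded scale G"
    and B_indep: "\<not> V.dependent B"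
    and B_span: "V.span B = UNIV"
    and B_homogeneous: "\<forall>b\<in>B. \<exists>k. b \<in> G k"
begin

abbreviation coord :: "'a \<Rightarrow> 'a \<Rightarrow> 'k" where
  "coord x b \<equiv> V.representation B x b"

lemma coord_add: "coord (x + y) b = coord x b + coord y b"
  using V.representation_add[OF B_indep] B_span by simp

lemma coord_scale: "coord (scale k x) b = k * coord x b"
  using V.representation_scale[OF B_indep] B_span by simp

lemma lin_fun_coord: "lin_fun scale (\<lambda>x. coord x b)"
  by (rule lin_funI) (simp_all add: coord_add coord_scale)

lemma coord_sum: "coord (\<Sum>i\<in>I. g i) b = (\<Sum>i\<in>I. coord (g i) b)"
  using lin_fun_sum[OF lin_fun_coord] .

lemma coord_basis: "b \<in> B \<Longrightarrow> coord b b' = (if b' = b then 1 else 0)"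
  using V.representation_basis[OF B_indep] by simp

lemma coord_nonzero_in_basis: "coord x b \<noteq> 0 \<Longrightarrow> b \<in> B"
  using V.representation_ne_zero by blast

lemma basis_expansion: "(\<Sum>b | coord x b \<noteq> 0. scale (coord x b) b) = x"
  using V.sum_nonzero_representation_eq[OF B_indep] B_span by simp

lemma coord_eq_0I: "(\<And>b. b \<in> B \<Longrightarrow> coord x b = 0) \<Longrightarrow> x = 0"
proof -
  assume "\<And>b. b \<in> B \<Longrightarrow> coord x b = 0"
  then have "{b. coord x b \<noteq> 0} = {}" using coord_nonzero_in_basis by blast
  then show "x = 0" using basis_expansion[of x] by simp
qed

lemma coord_inject: "(\<And>b. b \<in> B \<Longrightarrow> coord x b = coord y b) \<Longrightarrow> x = y"
  using coord_eq_0I[of "x - y"] lin_fun_diff[OF lin_fun_coord] by simp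

lemma zero_notin_basis: "0 \<notin> B"
  using V.dependent_zero B_indep by blast

lemma basis_notin_span_other:
  assumes "b \<in> B" "X \<subseteq> B" "b \<in> V.span X"
  shows "b \<in> X"
proof (rule ccontr)
  assume "b \<notin> X"
  then have "X \<subseteq> B - {b}" using assms(2) by auto
  then have "b \<in> V.span (B - {b})" using V.span_mono assms(3) by blast
  then show False using B_indep assms(1) V.dependent_def by blast
qed

lemma lin_fun_eq_on_basis:
  assumes f: "lin_fun scale f" and g: "lin_fun scale g" and eq: "\<And>b. b \<in> B \<Longrightarrow> f b = g b"
  shows "f x = g x"
proof -
  have "f (\<Sum>b | coord x b \<noteq> 0. scale (coord x b) b) = (\<Sum>b | coord x b \<noteq> 0. coord x b * f b)"
    by (simp add: lin_fun_sum[OF f] lin_fun_scale[OF f])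
  also have "\<dots> = (\<Sum>b | coord x b \<noteq> 0. coord x b * g b)"
    using eq coord_nonzero_in_basis by (auto intro!: sum.cong)
  also have "\<dots> = g (\<Sum>b | coord x b \<noteq> 0. scale (coord x b) b)"
    by (simp add: lin_fun_sum[OF g] lin_fun_scale[OF g])
  finally
  show ?thesis by (simp only: basis_expansion)
qed

lemma graded_subspace: "V.subspace (G d)"
  using grading by (simp add: graded_def)

lemma graded_mult: "x \<in> G d \<Longrightarrow> y \<in> G d' \<Longrightarrow> x * y \<in> G (d + d')"
  using grading by (simp add: graded_def)

lemma graded_sum_eq_0:
  "(\<And>d. d < N \<Longrightarrow> x d \<in> G d) \<Longrightarrow> (\<Sum>d<N. x d) = 0 \<Longrightarrow> d < N \<Longrightarrow> x d = 0"
  using grading unfolding graded_def by blast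

lemma graded_disjoint: "b \<in> G k \<Longrightarrow> b \<in> G k' \<Longrightarrow> k \<noteq> k' \<Longrightarrow> b = 0"
proof -
  assume b: "b \<in> G k" "b \<in> G k'" "k \<noteq> k'"
  define x where "x t = (if t = k then b else 0) + (if t = k' then - b else 0)" for t
  have "\<And>t. t < Suc (max k k') \<Longrightarrow> x t \<in> G t"
    using b by (auto simp: x_def V.subspace_0[OF graded_subspace] V.subspace_neg[OF graded_subspace])
  moreover have "(\<Sum>t<Suc (max k k'). x t) = 0"
    by (simp add: x_def sum.distrib less_Suc_eq_le)
  ultimately have "x k = 0" using graded_sum_eq_0[of "Suc (max k k')" x k] by simp
  then show ?thesis using b by (simp add: x_def)
qed

definition basis_degree :: "'a \<Rightarrow> nat" where
  "basis_degree b = (SOME k. b \<in> G k)"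

lemma basis_degree: "b \<in> B \<Longrightarrow> b \<in> G (basis_degree b)"
  unfolding basis_degree_def using B_homogeneous by (meson someI_ex)

lemma basis_degree_eq: "b \<in> B \<Longrightarrow> b \<in> G k \<Longrightarrow> basis_degree b = k"
  using graded_disjoint[of b k "basis_degree b"] basis_degree zero_notin_basis by auto

lemma homogeneous_component_eq_0:
  assumes x: "x \<in> G d" and "k \<noteq> d"
  shows "(\<Sum>b | coord x b \<noteq> 0 \<and> basis_degree b = k. scale (coord x b) b) = 0"
proof -
  define F where "F = {b. coord x b \<noteq> 0}"
  have finF: "finite F" unfolding F_def by (rule V.finite_representation)
  have FB: "F \<subseteq> B" unfolding F_def using coord_nonzero_in_basis by blast
  define N where "N = Suc (Max (insert k (insert d (basis_degree ` F))))"
  have fin: "finite (insert k (insert d (basis_degree ` F)))" using finF by simp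
  have kN: "k < N" and dN: "d < N" and degN: "\<And>b. b \<in> F \<Longrightarrow> basis_degree b < N"
    unfolding N_def using Max_ge[OF fin] by (auto simp: less_Suc_eq_le)
  define comp where
    "comp t = (\<Sum>b | b \<in> F \<and> basis_degree b = t. scale (coord x b) b) - (if t = d then x else 0)" for t
  have "comp t \<in> G t" for t
    unfolding comp_def using x FB basis_degree
    by (intro V.subspace_diff[OF graded_subspace] V.subspace_sum[OF graded_subspace])
      (auto intro!: V.subspace_scale[OF graded_subspace] simp: V.subspace_0[OF graded_subspace])
  moreover have "(\<Sum>t<N. comp t) = 0"
  proof -
    have "(\<Sum>t<N. \<Sum>b | b \<in> F \<and> basis_degree b = t. scale (coord x b) b) = (\<Sum>b\<in>F. scale (coord x b) b)"
      by (rule sum.group) (use finF degN in auto)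
    then show ?thesis
      using dN basis_expansion[of x] by (simp add: comp_def sum_subtractf F_def)
  qed
  ultimately have "comp k = 0" using graded_sum_eq_0 kN by blast
  then show ?thesis using assms by (simp add: comp_def F_def)
qed

lemma coord_homogeneous_eq_0:
  assumes x: "x \<in> G d" and b: "b \<in> B" "b \<in> G k" and kd: "k \<noteq> d"
  shows "coord x b = 0"
proof (rule ccontr)
  assume nz: "coord x b \<noteq> 0"
  let ?T = "{b. coord x b \<noteq> 0 \<and> basis_degree b = k}"
  have "finite ?T" using V.finite_representation[of B x] by (auto elim: finite_subset[rotated])
  moreover have "?T \<subseteq> B" using coord_nonzero_in_basis by blast
  moreover have "b \<in> ?T" using nz basis_degree_eq[OF b] by simp
  ultimately have "coord x b = 0"
    using V.independentD[OF B_indep _ _ homogeneous_component_eq_0[OF x kd]] by blast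
  with nz show False ..
qed

lemma homogeneous_eqI:
  assumes "x \<in> G d" "y \<in> G d" "\<And>b. b \<in> B \<Longrightarrow> b \<in> G d \<Longrightarrow> coord x b = coord y b"
  shows "x = y"
proof (rule coord_inject)
  fix b assume b: "b \<in> B"
  then show "coord x b = coord y b"
    using assms coord_homogeneous_eq_0[OF _ b basis_degree[OF b]] basis_degree[OF b]
    by (cases "basis_degree b = d") auto
qed

definition G_ge2 :: "'a set" where
  "G_ge2 = V.span (\<Union>d\<in>{2..}. G d)"

lemma G_ge2_subspace: "V.subspace G_ge2"
  by (simp add: G_ge2_def)

lemma graded_in_G_ge2: "2 \<le> d \<Longrightarrow> x \<in> G d \<Longrightarrow> x \<in> G_ge2"
  unfolding G_ge2_def by (rule V.span_base) auto

lemma G_ge2_mult_left: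
  assumes "y \<in> G_ge2" shows "x * y \<in> G_ge2"
proof -
  have "x \<in> V.span (\<Union>d. G d)" using grading by (simp add: graded_def)
  then show ?thesis
    using assms unfolding G_ge2_def
  proof (rule span_mult)
    fix x' y' assume "x' \<in> (\<Union>d. G d)" "y' \<in> (\<Union>d\<in>{2..}. G d)"
    then obtain d d' where "x' \<in> G d" "y' \<in> G d'" "2 \<le> d'" by auto
    then show "x' * y' \<in> V.span (\<Union>d\<in>{2..}. G d)"
      using graded_in_G_ge2[of "d + d'"] graded_mult unfolding G_ge2_def by simp
  qed
qed

lemma G_ge2_mult_right:
  assumes "x \<in> G_ge2" shows "x * y \<in> G_ge2"
proof -
  have "y \<in> V.span (\<Union>d. G d)" using grading by (simp add: graded_def)
  with assms show ?thesis
    unfolding G_ge2_def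
  proof (rule span_mult)
    fix x' y' assume "x' \<in> (\<Union>d\<in>{2..}. G d)" "y' \<in> (\<Union>d. G d)"
    then obtain d d' where "x' \<in> G d" "y' \<in> G d'" "2 \<le> d" by auto
    then show "x' * y' \<in> V.span (\<Union>d\<in>{2..}. G d)"
      using graded_in_G_ge2[of "d + d'"] graded_mult unfolding G_ge2_def by simp
  qed
qed

lemma coord_G_ge2_eq_0: "r \<in> G_ge2 \<Longrightarrow> b \<in> B \<Longrightarrow> b \<in> G k \<Longrightarrow> k < 2 \<Longrightarrow> coord r b = 0"
  unfolding G_ge2_def
proof (induction rule: V.span_induct)
  case base show ?case
    unfolding V.subspace_def by (auto simp: coord_add coord_scale lin_fun_zero[OF lin_fun_coord])
qed (auto intro: coord_homogeneous_eq_0)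

end

section \<open>Convolution of functionals\<close>

lemma sum_list_nested_mult:
  "(\<Sum>u\<leftarrow>xs. \<Sum>v\<leftarrow>ys. A u * C v) = (\<Sum>u\<leftarrow>xs. A u) * (\<Sum>v\<leftarrow>ys. C v :: 'k::comm_ring)"
  by (induction xs) (simp_all add: sum_list_const_mult distrib_right)

lemma pair_tensor_append: "pair_tensor f g (xs @ ys) = pair_tensor f g xs + pair_tensor f g ys"
  by (simp add: pair_tensor_def)

lemma pair_tensor_tmult:
  "pair_tensor f g (tmult xs ys) = (\<Sum>u\<leftarrow>xs. \<Sum>v\<leftarrow>ys. f (fst u * fst v) * g (snd u * snd v))"
  by (induction xs) (auto simp: tmult_def pair_tensor_def split_def comp_def)

lemma pair_tensor_eq: "pair_tensor f g xs = (\<Sum>u\<leftarrow>xs. f (fst u) * g (snd u))"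
  by (simp add: pair_tensor_def split_def)

text \<open>Only the algebra-map properties of the coproduct are assumed.\<close>
locale coproduct_algebra = k_algebra scale for scale :: "'k::field \<Rightarrow> 'a::ring_1 \<Rightarrow> 'a" +
  fixes Dl :: "'a \<Rightarrow> ('a \<times> 'a) list"
  assumes Dl_add: "teq scale (Dl (x + y)) (Dl x @ Dl y)"
    and Dl_scale: "teq scale (Dl (scale k x)) (map (\<lambda>(u, v). (scale k u, v)) (Dl x))"
    and Dl_mult: "teq scale (Dl (x * y)) (tmult (Dl x) (Dl y))"
    and Dl_one: "teq scale (Dl 1) [(1, 1)]"
begin

lemma teqD: "teq scale xs ys \<Longrightarrow> lin_fun scale f \<Longrightarrow> lin_fun scale g \<Longrightarrow>
    pair_tensor f g xs = pair_tensor f g ys"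
  by (simp add: teq_def)

lemma pair_tensor_scale: "lin_fun scale f \<Longrightarrow>
    pair_tensor f g (map (\<lambda>(u, v). (scale k u, v)) xs) = k * pair_tensor f g xs"
  by (induction xs) (auto simp: pair_tensor_def lin_fun_scale algebra_simps)

lemma lin_fun_conv: "lin_fun scale f \<Longrightarrow> lin_fun scale g \<Longrightarrow> lin_fun scale (conv Dl f g)"
  by (rule lin_funI)
    (simp_all add: conv_def teqD[OF Dl_add] teqD[OF Dl_scale] pair_tensor_append pair_tensor_scale)

lemma conv_one: "lin_fun scale f \<Longrightarrow> lin_fun scale g \<Longrightarrow> conv Dl f g 1 = f 1 * g 1"
  unfolding conv_def by (subst teqD[OF Dl_one]) (simp_all add: pair_tensor_def)

lemma conv_mult: "lin_fun scale f \<Longrightarrow> lin_fun scale g \<Longrightarrow>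
    conv Dl f g (x * y) = (\<Sum>u\<leftarrow>Dl x. \<Sum>v\<leftarrow>Dl y. f (fst u * fst v) * g (snd u * snd v))"
  by (simp add: conv_def teqD[OF Dl_mult] pair_tensor_tmult)

lemma character_conv:
  assumes f: "character f" and g: "character g"
  shows "character (conv Dl f g)"
proof -
  have lf: "lin_fun scale f" and lg: "lin_fun scale g" using f g by (auto simp: character_def)
  have "conv Dl f g (x * y) = conv Dl f g x * conv Dl f g y" for x y
  proof -
    have "conv Dl f g (x * y) = (\<Sum>u\<leftarrow>Dl x. \<Sum>v\<leftarrow>Dl y. (f (fst u) * g (snd u)) * (f (fst v) * g (snd v)))"
      using f g by (simp add: conv_mult[OF lf lg] character_def algebra_simps)
    then show ?thesis by (simp only: sum_list_nested_mult conv_def pair_tensor_eq)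
  qed
  then show ?thesis using lin_fun_conv[OF lf lg] conv_one[OF lf lg] f g by (simp add: character_def)
qed

lemma skew_derivation_conv_left:
  assumes f: "character f" and D: "skew_derivation p s D"
  shows "skew_derivation (conv Dl f p) (conv Dl f s) (conv Dl f D)"
proof -
  have lf: "lin_fun scale f" and lD: "lin_fun scale D"
    using f D by (auto simp: character_def skew_derivation_def)
  have "conv Dl f D (x * y) = conv Dl f p x * conv Dl f D y + conv Dl f D x * conv Dl f s y" for x y
  proof -
    have "conv Dl f D (x * y) =
        (\<Sum>u\<leftarrow>Dl x. \<Sum>v\<leftarrow>Dl y. (f (fst u) * p (snd u)) * (f (fst v) * D (snd v)))
      + (\<Sum>u\<leftarrow>Dl x. \<Sum>v\<leftarrow>Dl y. (f (fst u) * D (snd u)) * (f (fst v) * s (snd v)))"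
      using f D by (simp add: conv_mult[OF lf lD] character_def skew_derivation_def algebra_simps
          flip: sum_list_addf)
    then show ?thesis by (simp only: sum_list_nested_mult conv_def pair_tensor_eq)
  qed
  then show ?thesis using lin_fun_conv[OF lf lD] by (simp add: skew_derivation_def)
qed

lemma skew_derivation_conv_right:
  assumes g: "character g" and D: "skew_derivation p s D"
  shows "skew_derivation (conv Dl p g) (conv Dl s g) (conv Dl D g)"
proof -
  have lg: "lin_fun scale g" and lD: "lin_fun scale D"
    using g D by (auto simp: character_def skew_derivation_def)
  have "conv Dl D g (x * y) = conv Dl p g x * conv Dl D g y + conv Dl D g x * conv Dl s g y" for x y
  proof -
    have "conv Dl D g (x * y) =
        (\<Sum>u\<leftarrow>Dl x. \<Sum>v\<leftarrow>Dl y. (p (fst u) * g (snd u)) * (D (fst v) * g (snd v)))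
      + (\<Sum>u\<leftarrow>Dl x. \<Sum>v\<leftarrow>Dl y. (D (fst u) * g (snd u)) * (s (fst v) * g (snd v)))"
      using g D by (simp add: conv_mult[OF lD lg] character_def skew_derivation_def algebra_simps
          flip: sum_list_addf)
    then show ?thesis by (simp only: sum_list_nested_mult conv_def pair_tensor_eq)
  qed
  then show ?thesis using lin_fun_conv[OF lD lg] by (simp add: skew_derivation_def)
qed

end

section \<open>The idempotents of \<open>A_q(g)\<close>\<close>

locale Aq = coproduct_algebra scale Dl + graded_basis scale G B
  for scale :: "'k::field_char_0 \<Rightarrow> 'a::ring_1 \<Rightarrow> 'a" and Dl G B +
  fixes n :: nat and q :: 'k and m :: nat and c :: "nat \<Rightarrow> nat \<Rightarrow> int"
    and h e :: "nat \<Rightarrow> 'a" and eps :: "'a \<Rightarrow> 'k"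
  assumes m_pos: "0 < m"
    and n_ge_2: "2 \<le> n"
    and q_primitive: "primitive_root (n ^ 2) q"
    and generated: "\<forall>x. x \<in> gen_alg scale m h e"
    and h_comm: "\<forall>i<m. \<forall>j<m. h i * h j = h j * h i"
    and h_pow: "\<forall>i<m. h i ^ n = 1"
    and h_e: "\<forall>i<m. \<forall>j<m. h i * e j = scale (if i = j then q ^ n else 1) (e j * h i)"
    and h_deg: "\<forall>i<m. h i \<in> G 0"
    and e_deg: "\<forall>i<m. e i \<in> G 1"
    and idem_in_basis: "\<forall>a\<in>idx m n. one_a scale m n q h a \<in> B"
    and idem_e_in_basis: "\<forall>a\<in>idx m n. \<forall>i<m. one_a scale m n q h a * e i \<in> B"
    and Dl_h: "\<forall>i<m. teq scale (Dl (h i)) [(h i, h i)]"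
    and Dl_e: "\<forall>i<m. teq scale (Dl (e i))
        [(e i, b_inv scale m n q c h i),
         (1, (\<Sum>t\<in>{1..n-1}. one_ik scale n q h i t) * e i),
         (H_inv m n c h i, one_ik scale n q h i 0 * e i)]"
    and eps_lin: "lin_fun scale eps"
    and eps_mult: "\<forall>x y. eps (x * y) = eps x * eps y"
    and eps_one: "eps 1 = 1"
    and eps_h: "\<forall>i<m. eps (h i) = 1"
    and eps_e: "\<forall>i<m. eps (e i) = 0"
begin

abbreviation qq :: 'k where "qq \<equiv> q ^ n"
abbreviation idem :: "nat \<Rightarrow> nat \<Rightarrow> 'a" where "idem i t \<equiv> one_ik scale n q h i t"
abbreviation Idem :: "(nat \<Rightarrow> nat) \<Rightarrow> 'a" where "Idem a \<equiv> one_a scale m n q h a"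

lemma n_pos: "0 < n"
  using n_ge_2 by simp

lemma qq_primitive: "primitive_root n qq"
  using primitive_root_power[of n n q] q_primitive n_pos by (simp add: power2_eq_square)

lemmas qq_nonzero = primitive_root_nonzero[OF n_pos qq_primitive]
  and qq_powi_eq_1_iff = primitive_root_powi_eq_1_iff[OF n_pos qq_primitive]
  and qq_powi_eq_iff = primitive_root_powi_eq_iff[OF n_pos qq_primitive]
  and qq_geometric_sum = primitive_root_geometric_sum[OF n_pos qq_primitive]

lemma q_nonzero: "q \<noteq> 0"
  using qq_nonzero n_pos by auto

lemma h_pow_mult_eigen: "h k * v = scale lam v \<Longrightarrow> h k ^ s * v = scale (lam ^ s) v"
  by (induction s) (auto simp: mult.assoc scale_mult_right)

lemma mult_h_pow_eigen: "v * h k = scale lam v \<Longrightarrow> v * h k ^ s = scale (lam ^ s) v"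
  by (induction s) (auto simp: power_Suc2 mult.assoc[symmetric] scale_mult_left mult.commute)

lemma idem_coeff_eq: "qq powi (- (int t * int s)) * (qq powi w) ^ s = (qq powi (w - int t)) ^ s"
proof -
  have "(qq powi (w - int t)) ^ s = qq powi (w * int s + (- (int t * int s)))"
    by (simp add: power_int_power' algebra_simps q_nonzero)
  also have "\<dots> = qq powi (w * int s) * qq powi (- (int t * int s))"
    by (rule power_int_add) (simp add: q_nonzero)
  finally show ?thesis by (simp add: power_int_power' q_nonzero)
qed

text \<open>The discrete Fourier inversion behind all properties of the idempotents:
  \<open>idem k t\<close> projects onto the \<open>qq ^ t\<close>-eigenspace of \<open>h k\<close>.\<close>
lemma idem_mult_eigen:
  assumes "h k * v = scale (qq powi w) v"
  shows "idem k t * v = scale (if int n dvd (w - int t) then 1 else 0) v"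
proof -
  have "idem k t * v = scale (1 / of_nat n) (\<Sum>s<n. scale (qq powi (- (int t * int s))) (h k ^ s * v))"
    by (simp add: one_ik_def scale_mult_left sum_distrib_right)
  also have "\<dots> = scale (1 / of_nat n) (\<Sum>s<n. scale ((qq powi (w - int t)) ^ s) v)"
    using h_pow_mult_eigen[OF assms] by (simp add: idem_coeff_eq)
  also have "\<dots> = scale ((1 / of_nat n) * (\<Sum>s<n. (qq powi (w - int t)) ^ s)) v"
    by (simp only: V.scale_scale[symmetric] V.scale_sum_left)
  finally show ?thesis using n_pos by (simp add: qq_geometric_sum)
qed

lemma mult_idem_eigen:
  assumes "v * h k = scale (qq powi w) v"
  shows "v * idem k t = scale (if int n dvd (w - int t) then 1 else 0) v"
proof -
  have "v * idem k t = scale (1 / of_nat n) (\<Sum>s<n. scale (qq powi (- (int t * int s))) (v * h k ^ s))"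
    by (simp add: one_ik_def scale_mult_right sum_distrib_left)
  also have "\<dots> = scale (1 / of_nat n) (\<Sum>s<n. scale ((qq powi (w - int t)) ^ s) v)"
    using mult_h_pow_eigen[OF assms] by (simp add: idem_coeff_eq)
  also have "\<dots> = scale ((1 / of_nat n) * (\<Sum>s<n. (qq powi (w - int t)) ^ s)) v"
    by (simp only: V.scale_scale[symmetric] V.scale_sum_left)
  finally show ?thesis using n_pos by (simp add: qq_geometric_sum)
qed

lemma prod_idem_mult_eigen:
  assumes "\<And>k. k < m \<Longrightarrow> h k * v = scale (qq powi w k) v" "set L \<subseteq> {..<m}"
  shows "prod_list (map (\<lambda>i. idem i (a i)) L) * v
      = scale (if \<forall>k\<in>set L. int n dvd (w k - int (a k)) then 1 else 0) v"
  using assms(2)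
proof (induction L)
  case (Cons i L)
  then show ?case
    using idem_mult_eigen[OF assms(1), of i "a i"]
    by (simp add: mult.assoc scale_mult_right)
qed simp

lemma mult_prod_idem_eigen:
  assumes "\<And>k. k < m \<Longrightarrow> v * h k = scale (qq powi w k) v" "set L \<subseteq> {..<m}"
  shows "v * prod_list (map (\<lambda>i. idem i (a i)) L)
      = scale (if \<forall>k\<in>set L. int n dvd (w k - int (a k)) then 1 else 0) v"
  using assms(2)
proof (induction L rule: rev_induct)
  case (snoc i L)
  then show ?case
    using mult_idem_eigen[OF assms(1), of i "a i"]
    by (simp add: mult.assoc[symmetric] scale_mult_left)
qed simp

lemma Idem_mult_eigen:
  assumes "\<And>k. k < m \<Longrightarrow> h k * v = scale (qq powi w k) v"
  shows "Idem a * v = scale (if \<forall>k<m. int n dvd (w k - int (a k)) then 1 else 0) v"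
  using prod_idem_mult_eigen[OF assms, of "[0..<m]" a] by (simp add: one_a_def atLeast0LessThan Ball_def)

lemma mult_Idem_eigen:
  assumes "\<And>k. k < m \<Longrightarrow> v * h k = scale (qq powi w k) v"
  shows "v * Idem a = scale (if \<forall>k<m. int n dvd (w k - int (a k)) then 1 else 0) v"
  using mult_prod_idem_eigen[OF assms, of "[0..<m]" a] by (simp add: one_a_def atLeast0LessThan Ball_def)

lemma h_mult_h_pow: "k < m \<Longrightarrow> i < m \<Longrightarrow> h k * h i ^ s = h i ^ s * h k"
proof (induction s)
  case (Suc s)
  have "h k * h i ^ Suc s = (h k * h i) * h i ^ s" by (simp add: mult.assoc)
  also have "\<dots> = h i * (h k * h i ^ s)" using h_comm Suc.prems by (simp add: mult.assoc)
  finally show ?case using Suc by (simp add: mult.assoc)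
qed simp

lemma h_mult_idem: "k < m \<Longrightarrow> i < m \<Longrightarrow> h k * idem i t = idem i t * h k"
  unfolding one_ik_def scale_mult_left scale_mult_right sum_distrib_left sum_distrib_right
  by (simp add: h_mult_h_pow)

lemma h_mult_idem_same: "k < m \<Longrightarrow> h k * idem k t = scale (qq ^ t) (idem k t)"
proof -
  assume k: "k < m"
  define f where "f s = scale (qq powi (- (int t * int s))) (h k ^ s)" for s
  have hf: "h k * f s = scale (qq ^ t) (f (Suc s))" for s
  proof -
    have "qq ^ t * qq powi (- (int t * int (Suc s))) = qq powi (int t + (- (int t * int (Suc s))))"
      by (subst power_int_add) (auto simp: q_nonzero)
    also have "int t + (- (int t * int (Suc s))) = - (int t * int s)" by (simp add: algebra_simps)
    finally show ?thesis by (simp add: f_def scale_mult_right)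
  qed
  have "f n = f 0"
    using h_pow k qq_powi_eq_1_iff[of "- (int t * int n)"] by (simp add: f_def)
  then have shift: "(\<Sum>s<n. f (Suc s)) = (\<Sum>s<n. f s)"
    using sum.lessThan_Suc_shift[of f n] by (simp add: add.commute)
  have idem: "idem k t = scale (1 / of_nat n) (\<Sum>s<n. f s)" by (simp add: one_ik_def f_def)
  have "h k * idem k t = scale (1 / of_nat n) (\<Sum>s<n. h k * f s)"
    by (simp add: idem scale_mult_right sum_distrib_left)
  also have "\<dots> = scale (1 / of_nat n) (scale (qq ^ t) (\<Sum>s<n. f (Suc s)))"
    by (simp add: hf V.scale_sum_right)
  finally show ?thesis by (simp add: shift idem V.scale_left_commute[of "qq ^ t"])
qed

lemma sum_idem: "k < m \<Longrightarrow> (\<Sum>t<n. idem k t) = 1"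
proof -
  assume k: "k < m"
  have "(\<Sum>t<n. idem k t) = scale (1 / of_nat n) (\<Sum>t<n. \<Sum>s<n. scale (qq powi (- (int t * int s))) (h k ^ s))"
    by (simp add: one_ik_def V.scale_sum_right)
  also have "\<dots> = scale (1 / of_nat n) (\<Sum>s<n. \<Sum>t<n. scale (qq powi (- (int t * int s))) (h k ^ s))"
    by (subst sum.swap) (rule refl)
  also have "\<dots> = scale (1 / of_nat n) (\<Sum>s<n. scale (\<Sum>t<n. (qq powi (- int s)) ^ t) (h k ^ s))"
    by (simp add: V.scale_sum_left power_int_power' mult.commute)
  also have "\<dots> = scale (1 / of_nat n) (\<Sum>s<n. if s = 0 then scale (of_nat n) 1 else 0)"
  proof (intro arg_cong[where f = "scale _"] sum.cong refl)
    fix s assume "s \<in> {..<n}"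
    then have "int n dvd - int s \<longleftrightarrow> s = 0" by (auto dest: dvd_imp_le)
    then show "scale (\<Sum>t<n. (qq powi (- int s)) ^ t) (h k ^ s) = (if s = 0 then scale (of_nat n) 1 else 0)"
      by (simp add: qq_geometric_sum)
  qed
  finally show ?thesis using n_pos by simp
qed

definition idem_prefix :: "nat \<Rightarrow> (nat \<Rightarrow> nat) \<Rightarrow> 'a" where
  "idem_prefix l a = prod_list (map (\<lambda>i. idem i (a i)) [0..<l])"

lemma idem_prefix_upd: "idem_prefix l (a(l := t)) = idem_prefix l a"
  unfolding idem_prefix_def by (rule arg_cong[where f = prod_list], rule map_cong) auto

lemma h_mult_idem_prefix_comm: "k < m \<Longrightarrow> l \<le> m \<Longrightarrow> h k * idem_prefix l a = idem_prefix l a * h k"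
proof (induction l)
  case (Suc l)
  then show ?case
    by (simp add: idem_prefix_def mult.assoc[symmetric]) (simp add: mult.assoc h_mult_idem)
qed (simp add: idem_prefix_def)

lemma h_mult_idem_prefix:
  "k < l \<Longrightarrow> l \<le> m \<Longrightarrow> h k * idem_prefix l a = scale (qq ^ a k) (idem_prefix l a)"
proof (induction l)
  case (Suc l)
  have split: "idem_prefix (Suc l) a = idem_prefix l a * idem l (a l)" by (simp add: idem_prefix_def)
  show ?case
  proof (cases "k = l")
    case True
    then have "h k * idem_prefix (Suc l) a = idem_prefix l a * (h k * idem k (a k))"
      using Suc.prems h_mult_idem_prefix_comm[of k l a] split by (simp add: mult.assoc[symmetric])
    then show ?thesis using h_mult_idem_same[of k "a k"] Suc.prems True split by (simp add: scale_mult_right)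
  next
    case False
    then show ?thesis using Suc split by (simp add: mult.assoc[symmetric] scale_mult_left)
  qed
qed simp

lemma h_mult_Idem: "k < m \<Longrightarrow> h k * Idem a = scale (qq powi int (a k)) (Idem a)"
  using h_mult_idem_prefix[of k m a] by (simp add: idem_prefix_def one_a_def)

lemma Idem_mult_h: "k < m \<Longrightarrow> Idem a * h k = scale (qq powi int (a k)) (Idem a)"
  using h_mult_idem_prefix[of k m a] h_mult_idem_prefix_comm[of k m a]
  by (simp add: idem_prefix_def one_a_def)

lemma idx_0: "idx 0 n = {\<lambda>_. 0}"
  by (auto simp: idx_def)

lemma idx_Suc: "idx (Suc l) n = (\<lambda>(a, t). a(l := t)) ` (idx l n \<times> {..<n})"
proof
  show "idx (Suc l) n \<subseteq> (\<lambda>(a, t). a(l := t)) ` (idx l n \<times> {..<n})"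
  proof
    fix a assume a: "a \<in> idx (Suc l) n"
    then have "(a(l := 0), a l) \<in> idx l n \<times> {..<n}" by (auto simp: idx_def)
    moreover have "a = (\<lambda>(a, t). a(l := t)) (a(l := 0), a l)" by simp
    ultimately show "a \<in> (\<lambda>(a, t). a(l := t)) ` (idx l n \<times> {..<n})" by blast
  qed
qed (auto simp: idx_def)

lemma inj_on_idx_Suc: "inj_on (\<lambda>(a, t). a(l := t)) (idx l n \<times> {..<n})"
proof (rule inj_onI, clarify)
  fix a t b u assume "a \<in> idx l n" "b \<in> idx l n" and eq: "a(l := t) = b(l := u)"
  then have "a j = b j" for j
  proof (cases "j = l")
    case False then show ?thesis using fun_cong[OF eq, of j] by simp
  qed (use \<open>a \<in> idx l n\<close> \<open>b \<in> idx l n\<close> in \<open>simp add: idx_def\<close>)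
  then show "a = b \<and> t = u" using fun_cong[OF eq, of l] by auto
qed

lemma finite_idx: "finite (idx l n)"
  by (induction l) (auto simp: idx_Suc idx_0)

lemma sum_idem_prefix: "l \<le> m \<Longrightarrow> (\<Sum>a\<in>idx l n. idem_prefix l a) = 1"
proof (induction l)
  case (Suc l)
  have "(\<Sum>a\<in>idx (Suc l) n. idem_prefix (Suc l) a)
      = (\<Sum>(a, t)\<in>idx l n \<times> {..<n}. idem_prefix l a * idem l t)"
    unfolding idx_Suc
  proof (subst sum.reindex[OF inj_on_idx_Suc], rule sum.cong)
    fix x assume "x \<in> idx l n \<times> {..<n}"
    obtain a t where x: "x = (a, t)" by (cases x)
    have "idem_prefix (Suc l) (a(l := t)) = idem_prefix l (a(l := t)) * idem l t"
      by (simp add: idem_prefix_def)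
    then show "((\<lambda>a. idem_prefix (Suc l) a) \<circ> (\<lambda>(a, t). a(l := t))) x = (case x of (a, t) \<Rightarrow> idem_prefix l a * idem l t)"
      using x by (simp add: idem_prefix_upd)
  qed simp
  also have "\<dots> = (\<Sum>a\<in>idx l n. idem_prefix l a * (\<Sum>t<n. idem l t))"
    by (simp add: sum.cartesian_product[symmetric] sum_distrib_left)
  finally show ?case using Suc sum_idem[of l] by simp
qed (simp add: idx_0 idem_prefix_def)

lemma sum_Idem: "(\<Sum>a\<in>idx m n. Idem a) = 1"
  using sum_idem_prefix[of m] by (simp add: idem_prefix_def one_a_def)

lemma e_mult_h: "k < m \<Longrightarrow> i < m \<Longrightarrow> e i * h k = scale (qq powi - int (unitv i k)) (h k * e i)"
proof -
  assume km: "k < m" "i < m"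
  have "h k * e i = scale (qq powi int (unitv i k)) (e i * h k)"
    using h_e km by (simp add: unitv_def)
  moreover have "qq powi - int (unitv i k) * qq powi int (unitv i k) = 1"
    using qq_nonzero by (simp add: power_int_minus)
  ultimately show ?thesis by simp
qed

lemma h_mult_Idem_e: "k < m \<Longrightarrow> h k * (Idem a * e i) = scale (qq powi int (a k)) (Idem a * e i)"
  by (simp add: mult.assoc[symmetric] h_mult_Idem scale_mult_left)

lemma Idem_e_mult_h: "k < m \<Longrightarrow> i < m \<Longrightarrow>
    (Idem a * e i) * h k = scale (qq powi (int (a k) - int (unitv i k))) (Idem a * e i)"
proof -
  assume km: "k < m" "i < m"
  have "(Idem a * e i) * h k = scale (qq powi - int (unitv i k)) ((Idem a * h k) * e i)"
    by (simp add: mult.assoc e_mult_h km scale_mult_right)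
  also have "\<dots> = scale (qq powi - int (unitv i k) * qq powi int (a k)) (Idem a * e i)"
    by (simp add: Idem_mult_h km scale_mult_left)
  also have "qq powi - int (unitv i k) * qq powi int (a k) = qq powi (int (a k) - int (unitv i k))"
    by (subst power_int_add[symmetric]) (auto simp: q_nonzero)
  finally show ?thesis .
qed

lemma idx_cong_iff_eq: "a \<in> idx m n \<Longrightarrow> b \<in> idx m n \<Longrightarrow>
    (\<forall>k<m. int n dvd (int (b k) - int (a k))) \<longleftrightarrow> a = b"
proof
  assume ab: "a \<in> idx m n" "b \<in> idx m n" and cong: "\<forall>k<m. int n dvd (int (b k) - int (a k))"
  show "a = b"
  proof
    fix k show "a k = b k"
    proof (cases "k < m")
      case True
      then have "int (b k) mod int n = int (a k) mod int n" using cong by (simp add: mod_eq_dvd_iff)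
      then show ?thesis using ab True by (simp add: idx_def)
    qed (use ab in \<open>simp add: idx_def\<close>)
  qed
qed simp

lemma Idem_mult_Idem: "a \<in> idx m n \<Longrightarrow> b \<in> idx m n \<Longrightarrow> Idem a * Idem b = (if a = b then Idem b else 0)"
  using Idem_mult_eigen[of "Idem b" "\<lambda>k. int (b k)" a, OF h_mult_Idem] idx_cong_iff_eq[of a b]
  by simp

lemma Idem_mult_Idem_e:
  "a \<in> idx m n \<Longrightarrow> b \<in> idx m n \<Longrightarrow> Idem a * (Idem b * e i) = (if a = b then Idem b * e i else 0)"
  by (simp add: mult.assoc[symmetric] Idem_mult_Idem)

lemma Idem_e_mult_Idem: "i < m \<Longrightarrow> (Idem a * e i) * Idem b =
    scale (if \<forall>k<m. int n dvd (int (a k) - int (unitv i k) - int (b k)) then 1 else 0) (Idem a * e i)"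
  by (rule mult_Idem_eigen) (simp add: Idem_e_mult_h)

lemma Idem_nonzero: "a \<in> idx m n \<Longrightarrow> Idem a \<noteq> 0"
  using idem_in_basis zero_notin_basis by force

lemma Idem_e_nonzero: "a \<in> idx m n \<Longrightarrow> i < m \<Longrightarrow> Idem a * e i \<noteq> 0"
  using idem_e_in_basis zero_notin_basis by force

lemma Idem_inject: "a \<in> idx m n \<Longrightarrow> b \<in> idx m n \<Longrightarrow> Idem a = Idem b \<longleftrightarrow> a = b"
  using Idem_mult_Idem[of a b] Idem_mult_Idem[of a a] Idem_nonzero[of b] by (cases "a = b") auto

lemma Idem_e_inject: "a \<in> idx m n \<Longrightarrow> b \<in> idx m n \<Longrightarrow> i < m \<Longrightarrow> j < m \<Longrightarrow>
    Idem a * e i = Idem b * e j \<longleftrightarrow> a = b \<and> i = j"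
proof
  assume ab: "a \<in> idx m n" "b \<in> idx m n" "i < m" "j < m" and eq: "Idem a * e i = Idem b * e j"
  have "a = b"
    using Idem_mult_Idem_e[of a b j] Idem_mult_Idem_e[of a a i] ab eq Idem_e_nonzero[OF ab(2,4)]
    by (cases "a = b") auto
  moreover have "i = j"
  proof (rule ccontr)
    assume "i \<noteq> j"
    have "(Idem b * e j) * h i = scale (qq powi (int (a i) - 1)) (Idem b * e j)"
      using Idem_e_mult_h[of i i a] ab eq by (simp add: unitv_def)
    moreover have "(Idem b * e j) * h i = scale (qq powi int (b i)) (Idem b * e j)"
      using Idem_e_mult_h[of i j b] ab \<open>i \<noteq> j\<close> by (simp add: unitv_def)
    ultimately have "qq powi (int (a i) - 1) = qq powi int (a i)"
      using Idem_e_nonzero[OF ab(2,4)] \<open>a = b\<close> V.scale_cancel_right by metis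
    then have "int n dvd (int (a i) - 1 - int (a i))"
      using qq_powi_eq_iff by blast
    then show False using n_ge_2 by (simp add: dvd_minus_iff)
  qed
  ultimately show "a = b \<and> i = j" ..
qed simp

lemma coord_Idem: "a \<in> idx m n \<Longrightarrow> b \<in> idx m n \<Longrightarrow> coord (Idem a) (Idem b) = (if a = b then 1 else 0)"
  using coord_basis[of "Idem a" "Idem b"] idem_in_basis Idem_inject[of b a] by auto

lemma coord_Idem_e: "a \<in> idx m n \<Longrightarrow> b \<in> idx m n \<Longrightarrow> i < m \<Longrightarrow> j < m \<Longrightarrow>
    coord (Idem a * e i) (Idem b * e j) = (if a = b \<and> i = j then 1 else 0)"
  using coord_basis[of "Idem a * e i" "Idem b * e j"] idem_e_in_basis Idem_e_inject[of b a j i] by auto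

lemma coord_sum_Idem: "b \<in> idx m n \<Longrightarrow> coord (\<Sum>a\<in>idx m n. scale (f a) (Idem a)) (Idem b) = f b"
  by (simp add: coord_sum coord_scale coord_Idem finite_idx if_distrib cong: if_cong)

lemma coord_sum_Idem_e: "b \<in> idx m n \<Longrightarrow> i < m \<Longrightarrow> j < m \<Longrightarrow>
    coord (\<Sum>a\<in>idx m n. scale (f a) (Idem a * e i)) (Idem b * e j) = (if i = j then f b else 0)"
  by (simp add: coord_sum coord_scale coord_Idem_e finite_idx if_distrib cong: if_cong)

lemma h_expansion: "k < m \<Longrightarrow> h k = (\<Sum>a\<in>idx m n. scale (qq powi int (a k)) (Idem a))"
proof -
  assume k: "k < m"
  have "h k = h k * (\<Sum>a\<in>idx m n. Idem a)" by (simp add: sum_Idem)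
  also have "\<dots> = (\<Sum>a\<in>idx m n. scale (qq powi int (a k)) (Idem a))"
    by (simp add: sum_distrib_left h_mult_Idem k)
  finally show ?thesis .
qed

lemma e_expansion: "e i = (\<Sum>a\<in>idx m n. Idem a * e i)"
  by (simp add: sum_Idem flip: sum_distrib_right)

lemma idem_expansion: "k < m \<Longrightarrow>
    idem k t = (\<Sum>a\<in>idx m n. scale (if int n dvd (int (a k) - int t) then 1 else 0) (Idem a))"
proof -
  assume k: "k < m"
  have "idem k t = (\<Sum>a\<in>idx m n. idem k t * Idem a)" by (simp add: sum_Idem flip: sum_distrib_left)
  also have "\<dots> = (\<Sum>a\<in>idx m n. scale (if int n dvd (int (a k) - int t) then 1 else 0) (Idem a))"
    by (intro sum.cong refl idem_mult_eigen) (simp add: h_mult_Idem k)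
  finally show ?thesis .
qed

lemma e_mult_Idem: "i < m \<Longrightarrow> e i * Idem b =
    (\<Sum>a\<in>idx m n. scale (if \<forall>k<m. int n dvd (int (a k) - int (unitv i k) - int (b k)) then 1 else 0)
      (Idem a * e i))"
  by (subst e_expansion) (simp add: Idem_e_mult_Idem sum_distrib_right)

end

section \<open>Basis vectors of degree 0 and 1\<close>

context Aq
begin

lemma G0_power_Suc: "x \<in> G 0 \<Longrightarrow> x ^ Suc s \<in> G 0"
  by (induction s) (use graded_mult[of x 0 _ 0] in auto)

lemma one_G0: "1 \<in> G 0"
  using G0_power_Suc[of "h 0" "n - 1"] h_deg h_pow m_pos n_pos by simp

lemma G0_power: "x \<in> G 0 \<Longrightarrow> x ^ s \<in> G 0"
  using G0_power_Suc one_G0 by (cases s) auto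

lemma G0_prod_list: "(\<And>x. x \<in> set xs \<Longrightarrow> x \<in> G 0) \<Longrightarrow> prod_list xs \<in> G 0"
  by (induction xs) (use one_G0 graded_mult[of _ 0 _ 0] in auto)

lemma idem_G0: "k < m \<Longrightarrow> idem k t \<in> G 0"
  unfolding one_ik_def using h_deg
  by (intro V.subspace_scale[OF graded_subspace] V.subspace_sum[OF graded_subspace] G0_power) auto

lemma Idem_G0: "Idem a \<in> G 0"
  unfolding one_a_def by (rule G0_prod_list) (auto intro: idem_G0)

lemma Idem_e_G1: "i < m \<Longrightarrow> Idem a * e i \<in> G 1"
  using graded_mult[OF Idem_G0 e_deg[rule_format]] by simp

definition Idems :: "'a set" where
  "Idems = Idem ` idx m n"

definition Idem_es :: "'a set" where
  "Idem_es = {Idem a * e i | a i. a \<in> idx m n \<and> i < m}"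

lemma span_Idems_G0: "V.span Idems \<subseteq> G 0"
  by (rule V.span_minimal) (auto simp: Idems_def Idem_G0 graded_subspace)

lemma span_Idem_es_G1: "V.span Idem_es \<subseteq> G 1"
  by (rule V.span_minimal) (auto simp: Idem_es_def Idem_e_G1[simplified] graded_subspace)

lemma eps_span_Idem_es: "x \<in> V.span Idem_es \<Longrightarrow> eps x = 0"
proof (induction rule: V.span_induct)
  case base show ?case
    unfolding V.subspace_def by (auto simp: lin_fun_add[OF eps_lin] lin_fun_scale[OF eps_lin] lin_fun_zero[OF eps_lin])
qed (use eps_mult eps_e in \<open>auto simp: Idem_es_def\<close>)

lemma span_Idems_mult: "x \<in> V.span Idems \<Longrightarrow> y \<in> V.span Idems \<Longrightarrow> x * y \<in> V.span Idems"
proof (rule span_mult)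
  fix x y assume "x \<in> Idems" "y \<in> Idems"
  then obtain a b where "a \<in> idx m n" "b \<in> idx m n" "x = Idem a" "y = Idem b"
    by (auto simp: Idems_def)
  moreover have "Idem b \<in> V.span Idems" using \<open>b \<in> idx m n\<close> by (auto simp: Idems_def intro: V.span_base)
  ultimately show "x * y \<in> V.span Idems" by (simp add: Idem_mult_Idem V.span_zero)
qed

lemma span_Idems_mult_Idem_es: "x \<in> V.span Idems \<Longrightarrow> y \<in> V.span Idem_es \<Longrightarrow> x * y \<in> V.span Idem_es"
proof (rule span_mult)
  fix x y assume "x \<in> Idems" "y \<in> Idem_es"
  then obtain a b i where "a \<in> idx m n" "b \<in> idx m n" "i < m" "x = Idem a" "y = Idem b * e i"
    by (auto simp: Idems_def Idem_es_def)
  moreover have "Idem b * e i \<in> V.span Idem_es"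
    using \<open>b \<in> idx m n\<close> \<open>i < m\<close> by (auto simp: Idem_es_def intro!: V.span_base)
  ultimately show "x * y \<in> V.span Idem_es" by (simp add: Idem_mult_Idem_e V.span_zero)
qed

lemma span_Idem_es_mult_Idems: "x \<in> V.span Idem_es \<Longrightarrow> y \<in> V.span Idems \<Longrightarrow> x * y \<in> V.span Idem_es"
proof (rule span_mult)
  fix x y assume "x \<in> Idem_es" "y \<in> Idems"
  then obtain a b i where "a \<in> idx m n" "b \<in> idx m n" "i < m" "x = Idem a * e i" "y = Idem b"
    by (auto simp: Idems_def Idem_es_def)
  moreover have "Idem a * e i \<in> V.span Idem_es"
    using \<open>a \<in> idx m n\<close> \<open>i < m\<close> by (auto simp: Idem_es_def intro!: V.span_base)
  ultimately show "x * y \<in> V.span Idem_es" by (simp add: Idem_e_mult_Idem V.span_scale)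
qed

text \<open>Splitting off degree 0 and degree 1 as spans of the known basis vectors is what shows
  that these are all basis vectors of degree at most 1.\<close>
definition low_split :: "'a \<Rightarrow> bool" where
  "low_split x \<longleftrightarrow> (\<exists>s0 s1 r. s0 \<in> V.span Idems \<and> s1 \<in> V.span Idem_es \<and> r \<in> G_ge2 \<and> eps r = 0
     \<and> x = s0 + s1 + r)"

lemma low_splitE:
  assumes "low_split x"
  obtains s0 s1 r where "s0 \<in> V.span Idems" "s1 \<in> V.span Idem_es" "r \<in> G_ge2" "eps r = 0"
    "x = s0 + s1 + r"
  using assms by (auto simp: low_split_def)

lemma low_split_add: "low_split x \<Longrightarrow> low_split y \<Longrightarrow> low_split (x + y)"
proof -
  assume "low_split x" "low_split y"
  then obtain s0 s1 r t0 t1 r' where x: "s0 \<in> V.span Idems" "s1 \<in> V.span Idem_es" "r \<in> G_ge2" "eps r = 0" "x = s0 + s1 + r"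
    and y: "t0 \<in> V.span Idems" "t1 \<in> V.span Idem_es" "r' \<in> G_ge2" "eps r' = 0" "y = t0 + t1 + r'"
    by (elim low_splitE)
  have "x + y = (s0 + t0) + (s1 + t1) + (r + r')" using x y by (simp add: add_ac)
  then show ?thesis
    unfolding low_split_def using x y
    by (intro exI[of _ "s0 + t0"] exI[of _ "s1 + t1"] exI[of _ "r + r'"])
      (simp add: V.span_add V.subspace_add[OF G_ge2_subspace] lin_fun_add[OF eps_lin])
qed

lemma low_split_scale: "low_split x \<Longrightarrow> low_split (scale k x)"
proof -
  assume "low_split x"
  then obtain s0 s1 r where x: "s0 \<in> V.span Idems" "s1 \<in> V.span Idem_es" "r \<in> G_ge2" "eps r = 0" "x = s0 + s1 + r"
    by (elim low_splitE)
  then show ?thesis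
    unfolding low_split_def
    by (intro exI[of _ "scale k s0"] exI[of _ "scale k s1"] exI[of _ "scale k r"])
      (simp add: V.span_scale V.subspace_scale[OF G_ge2_subspace] lin_fun_scale[OF eps_lin]
        V.scale_right_distrib)
qed

lemma low_split_mult: "low_split x \<Longrightarrow> low_split y \<Longrightarrow> low_split (x * y)"
proof -
  assume "low_split x" "low_split y"
  then obtain s0 s1 r t0 t1 r' where x: "s0 \<in> V.span Idems" "s1 \<in> V.span Idem_es" "r \<in> G_ge2" "eps r = 0" "x = s0 + s1 + r"
    and y: "t0 \<in> V.span Idems" "t1 \<in> V.span Idem_es" "r' \<in> G_ge2" "eps r' = 0" "y = t0 + t1 + r'"
    by (elim low_splitE)
  define R where "R = s1 * t1 + s0 * r' + s1 * r' + r * t0 + r * t1 + r * r'"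
  have "x * y = s0 * t0 + (s0 * t1 + s1 * t0) + R"
    unfolding x(5) y(5) R_def by (simp add: distrib_left distrib_right add_ac)
  moreover have "s0 * t0 \<in> V.span Idems" using x y span_Idems_mult by simp
  moreover have "s0 * t1 + s1 * t0 \<in> V.span Idem_es"
    using x y span_Idems_mult_Idem_es span_Idem_es_mult_Idems V.span_add by simp
  moreover have "s1 * t1 \<in> G (1 + 1)"
    using graded_mult[of s1 1 t1 1] x y span_Idem_es_G1 by auto
  then have "s1 * t1 \<in> G_ge2" using graded_in_G_ge2[of 2] by (simp only: one_add_one)
  then have "R \<in> G_ge2"
    unfolding R_def using x(3) y(3) G_ge2_mult_left G_ge2_mult_right
    by (intro V.subspace_add[OF G_ge2_subspace]) auto
  moreover have "eps R = 0"
    using x y eps_span_Idem_es by (simp add: R_def lin_fun_add[OF eps_lin] eps_mult)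
  ultimately show ?thesis unfolding low_split_def by blast
qed

lemma low_split_span_Idems: "s \<in> V.span Idems \<Longrightarrow> low_split s"
  unfolding low_split_def using V.subspace_0[OF G_ge2_subspace] lin_fun_zero[OF eps_lin]
  by (intro exI[of _ s] exI[of _ 0]) (auto simp: V.span_zero)

lemma low_split_span_Idem_es: "s \<in> V.span Idem_es \<Longrightarrow> low_split s"
  unfolding low_split_def using V.subspace_0[OF G_ge2_subspace] lin_fun_zero[OF eps_lin]
  by (intro exI[of _ 0] exI[of _ s] exI[of _ 0]) (auto simp: V.span_zero)

lemma low_split: "low_split x"
proof -
  have "x \<in> gen_alg scale m h e" using generated by simp
  then show ?thesis
  proof (induction rule: gen_alg.induct)
    case 1
    have "(\<Sum>a\<in>idx m n. Idem a) \<in> V.span Idems"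
      unfolding Idems_def by (intro V.span_sum V.span_base) auto
    then show ?case using sum_Idem low_split_span_Idems by simp
  next
    case (2 i)
    have "(\<Sum>a\<in>idx m n. scale (qq powi int (a i)) (Idem a)) \<in> V.span Idems"
      unfolding Idems_def by (intro V.span_sum V.span_scale V.span_base) auto
    then show ?case using h_expansion[OF 2] low_split_span_Idems by simp
  next
    case (3 i)
    have "(\<Sum>a\<in>idx m n. Idem a * e i) \<in> V.span Idem_es"
      unfolding Idem_es_def using 3 by (intro V.span_sum V.span_base) auto
    then show ?case using e_expansion[of i] low_split_span_Idem_es by simp
  qed (simp_all add: low_split_add low_split_mult low_split_scale)
qed

lemma basis_G0_in_Idems:
  assumes b: "b \<in> B" "b \<in> G 0"
  shows "b \<in> Idems"
proof -
  obtain s0 s1 r where split: "s0 \<in> V.span Idems" "s1 \<in> V.span Idem_es" "r \<in> G_ge2" "b = s0 + s1 + r"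
    using low_split[of b] unfolding low_split_def by blast
  have "b = s0"
  proof (rule homogeneous_eqI)
    fix b' assume "b' \<in> B" "b' \<in> G 0"
    then have "coord s1 b' = 0" "coord r b' = 0"
      using coord_homogeneous_eq_0[of s1 1 b' 0] coord_G_ge2_eq_0[of r b' 0] split span_Idem_es_G1 by auto
    then show "coord b b' = coord s0 b'" using split(4) by (simp add: coord_add)
  qed (use b split span_Idems_G0 in auto)
  then show ?thesis using basis_notin_span_other[OF b(1)] split(1) by (simp add: Idems_def idem_in_basis image_subset_iff)
qed

lemma basis_G1_in_Idem_es:
  assumes b: "b \<in> B" "b \<in> G 1"
  shows "b \<in> Idem_es"
proof -
  obtain s0 s1 r where split: "s0 \<in> V.span Idems" "s1 \<in> V.span Idem_es" "r \<in> G_ge2" "b = s0 + s1 + r"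
    using low_split[of b] unfolding low_split_def by blast
  have "b = s1"
  proof (rule homogeneous_eqI)
    fix b' assume "b' \<in> B" "b' \<in> G 1"
    then have "coord s0 b' = 0" "coord r b' = 0"
      using coord_homogeneous_eq_0[of s0 0 b' 1] coord_G_ge2_eq_0[of r b' 1] split span_Idems_G0 by auto
    then show "coord b b' = coord s1 b'" using split(4) by (simp add: coord_add)
  qed (use b split span_Idem_es_G1 in auto)
  moreover have "Idem_es \<subseteq> B" using idem_e_in_basis by (auto simp: Idem_es_def)
  ultimately show ?thesis using basis_notin_span_other[OF b(1)] split(2) by simp
qed

lemma eps_positive_degree:
  assumes x: "x \<in> G k" "1 \<le> k"
  shows "eps x = 0"
proof -
  obtain s0 s1 r where split: "s0 \<in> V.span Idems" "s1 \<in> V.span Idem_es" "r \<in> G_ge2" "eps r = 0"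
    "x = s0 + s1 + r"
    using low_split[of x] by (rule low_splitE)
  have "s0 = 0"
  proof (rule homogeneous_eqI)
    fix b' assume "b' \<in> B" "b' \<in> G 0"
    then have "coord s1 b' = 0" "coord r b' = 0" "coord x b' = 0"
      using coord_homogeneous_eq_0[of s1 1 b' 0] coord_G_ge2_eq_0[of r b' 0]
        coord_homogeneous_eq_0[of x k b' 0] split span_Idem_es_G1 x by auto
    then show "coord s0 b' = coord 0 b'"
      using split(5) by (simp add: coord_add lin_fun_zero[OF lin_fun_coord])
  qed (use split span_Idems_G0 V.subspace_0[OF graded_subspace] in auto)
  then show ?thesis using split eps_span_Idem_es by (simp add: lin_fun_add[OF eps_lin])
qed

end

section \<open>The characters \<open>chi w\<close> and the functionals \<open>Gamma j\<close>\<close>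

context Aq
begin

lemma character_eq_on_generators:
  assumes "character f" "character g"
    and "\<And>k. k < m \<Longrightarrow> f (h k) = g (h k)" "\<And>k. k < m \<Longrightarrow> f (e k) = g (e k)"
  shows "f = g"
proof
  fix x
  have "x \<in> gen_alg scale m h e" using generated by simp
  then show "f x = g x"
    by (induction rule: gen_alg.induct)
      (use assms in \<open>auto simp: character_def lin_fun_add lin_fun_scale\<close>)
qed

lemma skew_derivation_eq_on_generators:
  assumes "skew_derivation p s D1" "skew_derivation p s D2" "p 1 = 1" "s 1 = 1"
    and "\<And>k. k < m \<Longrightarrow> D1 (h k) = D2 (h k)" "\<And>k. k < m \<Longrightarrow> D1 (e k) = D2 (e k)"
  shows "D1 = D2"
proof
  fix x
  have "x \<in> gen_alg scale m h e" using generated by simp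
  then show "D1 x = D2 x"
  proof (induction rule: gen_alg.induct)
    case 1 then show ?case using skew_derivation_one assms by metis
  qed (use assms in \<open>auto simp: skew_derivation_def lin_fun_add lin_fun_scale\<close>)
qed

lemma character_eps: "character eps"
  using eps_lin eps_mult eps_one by (simp add: character_def)

lemma unitv_idx: "j < m \<Longrightarrow> unitv j \<in> idx m n"
  using n_ge_2 by (auto simp: idx_def unitv_def)

lemma neg_unitv_idx: "j < m \<Longrightarrow> neg_unitv n j \<in> idx m n"
  using n_ge_2 by (auto simp: idx_def neg_unitv_def)

lemma zero_idx: "(\<lambda>_. 0) \<in> idx m n"
  using n_ge_2 by (auto simp: idx_def)

definition chi :: "(nat \<Rightarrow> nat) \<Rightarrow> 'a \<Rightarrow> 'k" where
  "chi w x = coord x (Idem w)"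

definition Gamma :: "nat \<Rightarrow> 'a \<Rightarrow> 'k" where
  "Gamma j x = coord x (Idem (unitv j) * e j)"

lemma lin_fun_chi: "lin_fun scale (chi w)"
  unfolding chi_def[abs_def] by (rule lin_fun_coord)

lemma lin_fun_Gamma: "lin_fun scale (Gamma j)"
  unfolding Gamma_def[abs_def] by (rule lin_fun_coord)

lemma chi_sum_Idem: "w \<in> idx m n \<Longrightarrow> chi w (\<Sum>a\<in>idx m n. scale (f a) (Idem a)) = f w"
  by (simp add: chi_def coord_sum_Idem)

lemma chi_Idem: "a \<in> idx m n \<Longrightarrow> w \<in> idx m n \<Longrightarrow> chi w (Idem a) = (if a = w then 1 else 0)"
  by (simp add: chi_def coord_Idem)

lemma chi_h: "w \<in> idx m n \<Longrightarrow> k < m \<Longrightarrow> chi w (h k) = qq powi int (w k)"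
  using chi_sum_Idem[of w "\<lambda>a. qq powi int (a k)"] h_expansion[of k] by simp

lemma chi_one: "w \<in> idx m n \<Longrightarrow> chi w 1 = 1"
  using chi_sum_Idem[of w "\<lambda>a. 1"] sum_Idem by simp

lemma chi_idem: "w \<in> idx m n \<Longrightarrow> k < m \<Longrightarrow> chi w (idem k t) = (if int n dvd (int (w k) - int t) then 1 else 0)"
  using chi_sum_Idem[of w "\<lambda>a. if int n dvd (int (a k) - int t) then 1 else 0"] idem_expansion[of k t]
  by simp

lemma chi_b_inv: "w \<in> idx m n \<Longrightarrow> chi w (b_inv scale m n q c h k) = (\<Prod>l<m. q powi (c k l * int (w l)))"
  unfolding b_inv_def by (rule chi_sum_Idem)

lemma chi_positive_degree: "w \<in> idx m n \<Longrightarrow> x \<in> G d \<Longrightarrow> 1 \<le> d \<Longrightarrow> chi w x = 0"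
  unfolding chi_def using coord_homogeneous_eq_0[of x d "Idem w" 0] idem_in_basis Idem_G0 by auto

lemma chi_e: "w \<in> idx m n \<Longrightarrow> i < m \<Longrightarrow> chi w (e i) = 0"
  using chi_positive_degree[of w "e i" 1] e_deg by simp

lemma chi_h_mult: "w \<in> idx m n \<Longrightarrow> k < m \<Longrightarrow> chi w (h k * y) = qq powi int (w k) * chi w y"
proof (rule lin_fun_eq_on_basis[OF lin_fun_mult_left[OF lin_fun_chi] lin_fun_cmult[OF lin_fun_chi]])
  fix b assume w: "w \<in> idx m n" and k: "k < m" and b: "b \<in> B"
  show "chi w (h k * b) = qq powi int (w k) * chi w b"
  proof (cases "basis_degree b = 0")
    case True
    then obtain a where "a \<in> idx m n" "b = Idem a"
      using basis_G0_in_Idems[OF b] basis_degree[OF b] by (auto simp: Idems_def)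
    then show ?thesis using w k by (simp add: h_mult_Idem lin_fun_scale[OF lin_fun_chi] chi_Idem)
  next
    case False
    then show ?thesis
      using chi_positive_degree[OF w, of _ "basis_degree b"] graded_mult[OF h_deg[rule_format, OF k]]
        basis_degree[OF b] by simp
  qed
qed

lemma chi_e_mult:
  assumes w: "w \<in> idx m n" and i: "i < m" shows "chi w (e i * y) = 0"
proof -
  have "chi w (e i * y) = 0 * chi w y"
  proof (rule lin_fun_eq_on_basis[OF lin_fun_mult_left[OF lin_fun_chi] lin_fun_cmult[OF lin_fun_chi]])
    fix b assume b: "b \<in> B"
    have "e i * b \<in> G (1 + basis_degree b)"
      using graded_mult[OF e_deg[rule_format, OF i] basis_degree[OF b]] .
    then show "chi w (e i * b) = 0 * chi w b" using chi_positive_degree[OF w] by simp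
  qed
  then show ?thesis by simp
qed

lemma character_chi: "w \<in> idx m n \<Longrightarrow> character (chi w)"
proof -
  assume w: "w \<in> idx m n"
  have "\<forall>y. chi w (x * y) = chi w x * chi w y" for x
  proof -
    have "x \<in> gen_alg scale m h e" using generated by simp
    then show ?thesis
    proof (induction rule: gen_alg.induct)
      case (2 i) then show ?case using chi_h_mult[OF w] chi_h[OF w] by simp
    next
      case (3 i) then show ?case using chi_e_mult[OF w] chi_e[OF w] by simp
    qed (simp_all add: chi_one[OF w] distrib_right lin_fun_add[OF lin_fun_chi] lin_fun_scale[OF lin_fun_chi]
        scale_mult_left mult.assoc algebra_simps)
  qed
  then show ?thesis using lin_fun_chi chi_one[OF w] by (simp add: character_def)
qed

lemma eps_eq_chi_0: "eps = chi (\<lambda>_. 0)"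
  by (rule character_eq_on_generators[OF character_eps character_chi[OF zero_idx]])
    (simp_all add: chi_h[OF zero_idx] chi_e[OF zero_idx] eps_h eps_e)

lemma Gamma_Idem_e: "j < m \<Longrightarrow> i < m \<Longrightarrow> a \<in> idx m n \<Longrightarrow>
    Gamma j (Idem a * e i) = (if a = unitv j \<and> i = j then 1 else 0)"
  by (simp add: Gamma_def coord_Idem_e unitv_idx)

lemma Gamma_sum_Idem_e: "j < m \<Longrightarrow> i < m \<Longrightarrow>
    Gamma j (\<Sum>a\<in>idx m n. scale (f a) (Idem a * e i)) = (if i = j then f (unitv j) else 0)"
  by (simp add: Gamma_def coord_sum_Idem_e unitv_idx)

lemma Gamma_e: "j < m \<Longrightarrow> i < m \<Longrightarrow> Gamma j (e i) = (if i = j then 1 else 0)"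
  using Gamma_sum_Idem_e[of j i "\<lambda>_. 1"] e_expansion[of i] by simp

lemma Gamma_degree_ne_1: "j < m \<Longrightarrow> x \<in> G d \<Longrightarrow> d \<noteq> 1 \<Longrightarrow> Gamma j x = 0"
  unfolding Gamma_def
  using coord_homogeneous_eq_0[of x d "Idem (unitv j) * e j" 1] idem_e_in_basis unitv_idx Idem_e_G1
  by auto

lemma Gamma_h: "j < m \<Longrightarrow> k < m \<Longrightarrow> Gamma j (h k) = 0"
  using Gamma_degree_ne_1[of j "h k" 0] h_deg by simp

lemma Gamma_one: "j < m \<Longrightarrow> Gamma j 1 = 0"
  using Gamma_degree_ne_1 one_G0 by simp

lemma Gamma_h_mult:
  assumes j: "j < m" and k: "k < m"
  shows "Gamma j (h k * y) = qq powi int (unitv j k) * Gamma j y"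
proof (rule lin_fun_eq_on_basis[OF lin_fun_mult_left[OF lin_fun_Gamma] lin_fun_cmult[OF lin_fun_Gamma]])
  fix b assume b: "b \<in> B"
  show "Gamma j (h k * b) = qq powi int (unitv j k) * Gamma j b"
  proof (cases "basis_degree b = 1")
    case True
    then obtain a i where "a \<in> idx m n" "i < m" "b = Idem a * e i"
      using basis_G1_in_Idem_es[OF b] basis_degree[OF b] by (auto simp: Idem_es_def)
    then show ?thesis using j k by (simp add: h_mult_Idem_e lin_fun_scale[OF lin_fun_Gamma] Gamma_Idem_e)
  next
    case False
    then show ?thesis
      using Gamma_degree_ne_1[OF j] graded_mult[OF h_deg[rule_format, OF k] basis_degree[OF b]]
        basis_degree[OF b] by simp
  qed
qed

lemma Gamma_e_mult_Idem:
  assumes j: "j < m" and i: "i < m" and a: "a \<in> idx m n"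
  shows "Gamma j (e i * Idem a) = Gamma j (e i) * eps (Idem a)"
proof -
  have "(\<forall>k<m. int n dvd (int (unitv j k) - int (unitv j k) - int (a k))) \<longleftrightarrow> a = (\<lambda>_. 0)"
    using idx_cong_iff_eq[OF a zero_idx] by simp
  then show ?thesis
    using a i j by (simp add: e_mult_Idem Gamma_sum_Idem_e Gamma_e eps_eq_chi_0 chi_Idem zero_idx)
qed

lemma Gamma_e_mult:
  assumes j: "j < m" and i: "i < m"
  shows "Gamma j (e i * y) = Gamma j (e i) * eps y"
proof (rule lin_fun_eq_on_basis[OF lin_fun_mult_left[OF lin_fun_Gamma] lin_fun_cmult[OF eps_lin]])
  fix b assume b: "b \<in> B"
  show "Gamma j (e i * b) = Gamma j (e i) * eps b"
  proof (cases "basis_degree b = 0")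
    case True
    then obtain a where "a \<in> idx m n" "b = Idem a"
      using basis_G0_in_Idems[OF b] basis_degree[OF b] by (auto simp: Idems_def)
    then show ?thesis using Gamma_e_mult_Idem[OF j i] by simp
  next
    case False
    have "e i * b \<in> G (1 + basis_degree b)"
      using graded_mult[OF e_deg[rule_format, OF i] basis_degree[OF b]] .
    then show ?thesis
      using False Gamma_degree_ne_1[OF j] eps_positive_degree[OF basis_degree[OF b]] by simp
  qed
qed

lemma skew_derivation_Gamma:
  assumes j: "j < m"
  shows "skew_derivation (chi (unitv j)) eps (Gamma j)"
proof -
  let ?chi = "chi (unitv j)"
  have chr: "character ?chi" using character_chi[OF unitv_idx[OF j]] .
  have "\<forall>y. Gamma j (x * y) = ?chi x * Gamma j y + Gamma j x * eps y" for x
  proof -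
    have "x \<in> gen_alg scale m h e" using generated by simp
    then show ?thesis
    proof (induction rule: gen_alg.induct)
      case 1 then show ?case using chi_one unitv_idx j Gamma_one by simp
    next
      case (2 k) then show ?case
        using Gamma_h_mult[OF j 2] chi_h[OF unitv_idx[OF j] 2] Gamma_h[OF j 2] by simp
    next
      case (3 i) then show ?case using Gamma_e_mult[OF j 3] chi_e[OF unitv_idx[OF j] 3] by simp
    next
      case (4 x y) then show ?case
        by (simp add: distrib_right lin_fun_add[OF lin_fun_Gamma] lin_fun_add[OF lin_fun_chi]
            lin_fun_add[OF eps_lin] algebra_simps)
    next
      case (5 x y) then show ?case
        using chr eps_mult by (simp add: mult.assoc character_def algebra_simps)
    next
      case (6 x k) then show ?case
        by (simp add: scale_mult_left lin_fun_scale[OF lin_fun_Gamma] lin_fun_scale[OF lin_fun_chi] algebra_simps)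
    qed
  qed
  then show ?thesis using lin_fun_Gamma by (simp add: skew_derivation_def)
qed

end

section \<open>Conjugation in \<open>M_q(g)\<close>\<close>

context Aq
begin

lemma conv_h:
  assumes "lin_fun scale f" "lin_fun scale g" "k < m"
  shows "conv Dl f g (h k) = f (h k) * g (h k)"
  unfolding conv_def teqD[OF Dl_h[rule_format, OF assms(3)] assms(1,2)] by (simp add: pair_tensor_def)

lemma conv_e:
  assumes "lin_fun scale f" "lin_fun scale g" "i < m"
  shows "conv Dl f g (e i) =
    f (e i) * g (b_inv scale m n q c h i) + f 1 * g ((\<Sum>t\<in>{1..n-1}. idem i t) * e i)
    + f (H_inv m n c h i) * g (idem i 0 * e i)"
  unfolding conv_def teqD[OF Dl_e[rule_format, OF assms(3)] assms(1,2)] by (simp add: pair_tensor_def)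

lemma conv_e_characters:
  assumes "character f" "character g" "i < m" "f (e i) = 0" "g (e i) = 0"
  shows "conv Dl f g (e i) = 0"
  using assms by (simp add: conv_e character_lin_fun) (simp add: character_def)

lemma idx_add_mod: "w \<in> idx m n \<Longrightarrow> v \<in> idx m n \<Longrightarrow> (\<lambda>k. (w k + v k) mod n) \<in> idx m n"
  using n_pos by (auto simp: idx_def)

lemma conv_chi:
  assumes w: "w \<in> idx m n" and v: "v \<in> idx m n"
  shows "conv Dl (chi w) (chi v) = chi (\<lambda>k. (w k + v k) mod n)"
proof (rule character_eq_on_generators[OF character_conv[OF character_chi character_chi]
      character_chi[OF idx_add_mod]])
  fix k assume k: "k < m"
  have "int n dvd (int (w k + v k) - int ((w k + v k) mod n))"
    using mod_eq_dvd_iff[of "int (w k + v k)" "int n" "int (w k + v k) mod int n"]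
    by (simp add: of_nat_mod)
  then have "qq powi int (w k + v k) = qq powi int ((w k + v k) mod n)"
    by (simp only: qq_powi_eq_iff)
  then have "qq ^ w k * qq ^ v k = qq ^ ((w k + v k) mod n)"
    by (simp only: power_int_of_nat power_add)
  then show "conv Dl (chi w) (chi v) (h k) = chi (\<lambda>k. (w k + v k) mod n) (h k)"
    using k w v by (simp add: conv_h lin_fun_chi chi_h idx_add_mod)
  show "conv Dl (chi w) (chi v) (e k) = chi (\<lambda>k. (w k + v k) mod n) (e k)"
    using k w v by (simp add: conv_e_characters character_chi chi_e idx_add_mod)
qed (use w v in auto)

lemma chi_conj:
  assumes i: "i < m" and w: "w \<in> idx m n"
  shows "conv Dl (conv Dl (chi (unitv i)) (chi w)) (chi (neg_unitv n i)) = chi w"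
proof -
  have "((unitv i k + w k) mod n + neg_unitv n i k) mod n = w k" for k
  proof -
    have "w k < n" using w n_pos by (cases "k < m") (auto simp: idx_def)
    moreover have "((1 + w k) mod n + (n - 1)) mod n = (1 + w k + (n - 1)) mod n"
      by (simp add: mod_add_left_eq)
    moreover have "1 + w k + (n - 1) = w k + n" using n_pos by simp
    ultimately show ?thesis by (auto simp: unitv_def neg_unitv_def)
  qed
  then show ?thesis
    using i w by (simp add: conv_chi unitv_idx neg_unitv_idx idx_add_mod)
qed

lemma conv_chi_Gamma_e:
  assumes i: "i < m" and j: "j < m" and k: "k < m"
  shows "conv Dl (chi (unitv i)) (Gamma j) (e k) = (if k = j then 1 else 0)"
proof -
  let ?chi = "chi (unitv i)" and ?chj = "chi (unitv j)"
  have Gamma_mult_e: "Gamma j (y * e k) = ?chj y * (if k = j then 1 else 0)" for y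
    using skew_derivation_Gamma[OF j] eps_e Gamma_e[OF j k] k by (simp add: skew_derivation_def)
  have "conv Dl ?chi (Gamma j) (e k) = (\<Sum>t\<in>{1..n-1}. ?chj (idem k t)) * (if k = j then 1 else 0)
      + ?chi (H_inv m n c h k) * (?chj (idem k 0) * (if k = j then 1 else 0))"
    using i k by (simp add: conv_e lin_fun_chi lin_fun_Gamma chi_e chi_one unitv_idx Gamma_mult_e
        lin_fun_sum[OF lin_fun_chi])
  also have "\<dots> = (if k = j then 1 else 0)"
  proof (cases "k = j")
    case True
    have "int n dvd (1 - int t) \<longleftrightarrow> t = 1" if t: "t \<in> {1..n-1}" for t
    proof -
      have "int n dvd (1 - int t) \<longleftrightarrow> int n dvd (int t - 1)"
        by (metis dvd_minus_iff minus_diff_eq)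
      also have "\<dots> \<longleftrightarrow> n dvd (t - 1)"
        using t by (simp add: of_nat_diff flip: int_dvd_int_iff)
      also have "\<dots> \<longleftrightarrow> t = 1" using t n_pos by (auto dest: dvd_imp_le)
      finally show ?thesis .
    qed
    moreover have "?chj (idem k t) = (if int n dvd (1 - int t) then 1 else 0)" for t
      using True j by (subst chi_idem[OF unitv_idx[OF j]]) (simp_all add: unitv_def)
    ultimately have "(\<Sum>t\<in>{1..n-1}. ?chj (idem k t)) = (\<Sum>t\<in>{1..n-1}. if t = 1 then 1 else 0)"
      by (intro sum.cong) simp_all
    moreover have "?chj (idem k 0) = 0"
      using True j n_ge_2 by (subst chi_idem[OF unitv_idx[OF j]]) (simp_all add: unitv_def)
    ultimately show ?thesis using True n_ge_2 by simp
  qed simp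
  finally show ?thesis .
qed

lemma chi_neg_unitv_b_inv:
  assumes i: "i < m"
  shows "chi (neg_unitv n i) (b_inv scale m n q c h j) = qq powi c j i * q powi (- c j i)"
proof -
  have "chi (neg_unitv n i) (b_inv scale m n q c h j) = (\<Prod>l<m. q powi (c j l * int (neg_unitv n i l)))"
    using i by (simp add: chi_b_inv neg_unitv_idx)
  also have "\<dots> = (\<Prod>l<m. if l = i then q powi (c j i * (int n - 1)) else 1)"
    using n_ge_2 by (intro prod.cong) (auto simp: neg_unitv_def of_nat_diff)
  also have "\<dots> = q powi (int n * c j i + (- c j i))" using i by (simp add: algebra_simps)
  also have "\<dots> = qq powi c j i * q powi (- c j i)"
    by (simp add: power_int_add q_nonzero power_int_power del: add_uminus_conv_diff)
  finally show ?thesis .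
qed

lemma Gamma_conj:
  assumes i: "i < m" and j: "j < m"
  shows "conv Dl (conv Dl (chi (unitv i)) (Gamma j)) (chi (neg_unitv n i))
       = (\<lambda>x. (qq powi c j i * q powi (- c j i)) * Gamma j x)"
proof -
  let ?ci = "chi (unitv i)" and ?cj = "chi (unitv j)" and ?cn = "chi (neg_unitv n i)"
  define F where "F = conv Dl ?ci (Gamma j)"
  have ci: "character ?ci" and cj: "character ?cj" and cn: "character ?cn"
    using i j by (simp_all add: character_chi unitv_idx neg_unitv_idx)
  have dF: "skew_derivation (conv Dl ?ci ?cj) (conv Dl ?ci eps) F"
    unfolding F_def by (rule skew_derivation_conv_left[OF ci skew_derivation_Gamma[OF j]])
  have "skew_derivation (conv Dl (conv Dl ?ci ?cj) ?cn) (conv Dl (conv Dl ?ci eps) ?cn) (conv Dl F ?cn)"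
    by (rule skew_derivation_conv_right[OF cn dF])
  then have dconj: "skew_derivation ?cj eps (conv Dl F ?cn)"
    using chi_conj[OF i unitv_idx[OF j]] chi_conj[OF i zero_idx] by (simp add: eps_eq_chi_0)
  have lF: "lin_fun scale F" using dF by (simp add: skew_derivation_def)
  have F_one: "F 1 = 0"
    using skew_derivation_one[OF dF] character_conv[OF ci cj] character_conv[OF ci character_eps]
    by (simp add: character_def)
  have "conv Dl F ?cn = (\<lambda>x. (qq powi c j i * q powi (- c j i)) * Gamma j x)"
  proof (rule skew_derivation_eq_on_generators[OF dconj skew_derivation_cmult[OF skew_derivation_Gamma[OF j]]])
    show "?cj 1 = 1" using cj by (simp add: character_def)
    show "eps 1 = 1" by (rule eps_one)
    fix k assume k: "k < m"
    show "conv Dl F ?cn (h k) = qq powi c j i * q powi - c j i * Gamma j (h k)"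
      using k j conv_h[OF lF character_lin_fun[OF cn] k] conv_h[OF lin_fun_chi lin_fun_Gamma k]
      by (simp add: F_def Gamma_h)
    have "?cn (idem k 0 * e k) = 0"
      using cn k i by (simp add: character_def chi_e neg_unitv_idx)
    then show "conv Dl F ?cn (e k) = qq powi c j i * q powi - c j i * Gamma j (e k)"
      using k i j conv_e[OF lF character_lin_fun[OF cn] k] conv_chi_Gamma_e[OF i j k, folded F_def]
      by (simp add: F_one chi_neg_unitv_b_inv Gamma_e)
  qed
  then show ?thesis by (simp add: F_def)
qed

end

theorem lemma3p1:
  fixes scale :: "'k::field_char_0 \<Rightarrow> 'a::ring_1 \<Rightarrow> 'a"
    and m n :: nat and q :: 'k
    and a :: "nat \<Rightarrow> nat \<Rightarrow> int" and d :: "nat \<Rightarrow> int"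
    and h e :: "nat \<Rightarrow> 'a"
    and G :: "nat \<Rightarrow> 'a set" and B :: "'a set"
    and Dl :: "'a \<Rightarrow> ('a \<times> 'a) list" and eps :: "'a \<Rightarrow> 'k"
  defines "c \<equiv> (\<lambda>i j. d i * a i j)"
    and "qq \<equiv> q ^ n"
    and "Chi \<equiv> (\<lambda>i. dual_basis scale B (one_a scale m n q h (unitv i)))"
    and "Chi_inv \<equiv> (\<lambda>i. dual_basis scale B (one_a scale m n q h (neg_unitv n i)))"
    and "Gam \<equiv> (\<lambda>j. dual_basis scale B (one_a scale m n q h (unitv j) * e j))"
  assumes alg_closed: "alg_closed TYPE('k)"
    and cartan: "cartan_finite_type m a d"
    and n2: "n \<ge> 2"
    and q_prim: "primitive_root (n ^ 2) q"
    and kalg: "kalgebra scale"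
    and gen: "\<forall>x. x \<in> gen_alg scale m h e"
    and h_comm: "\<forall>i<m. \<forall>j<m. h i * h j = h j * h i"
    and h_pow: "\<forall>i<m. h i ^ n = 1"
    and h_e: "\<forall>i<m. \<forall>j<m. h i * e j = scale (if i = j then qq else 1) (e j * h i)"
    and e_nil: "\<forall>i<m. e i ^ ord_k (q ^ nat (c i i)) = 0"
    and grading: "graded scale G"
    and h_deg: "\<forall>i<m. h i \<in> G 0"
    and e_deg: "\<forall>i<m. e i \<in> G 1"
    and B_indep: "\<not> module.dependent scale B"
    and B_span: "module.span scale B = UNIV"
    and B_hom: "\<forall>b\<in>B. \<exists>k. b \<in> G k"
    and B_ones: "\<forall>x\<in>idx m n. one_a scale m n q h x \<in> B"
    and B_ones_e: "\<forall>x\<in>idx m n. \<forall>i<m. one_a scale m n q h x * e i \<in> B"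
    and coprod: "Aq_coproduct scale m n q c h e Dl"
    and eps_lin: "lin_fun scale eps"
    and eps_mult: "\<forall>x y. eps (x * y) = eps x * eps y"
    and eps_one: "eps 1 = 1"
    and eps_h: "\<forall>i<m. eps (h i) = 1"
    and eps_e: "\<forall>i<m. eps (e i) = 0"
  shows "\<forall>i<m. \<forall>j<m.
           dual_coprod (Gam j) = (\<lambda>p. ftensor (Chi j) (Gam j) p + ftensor (Gam j) eps p)
         \<and> conv Dl (conv Dl (Chi i) (Gam j)) (Chi_inv i)
             = (\<lambda>x. (qq powi (c j i) * q powi (- c j i)) * Gam j x)"
proof (cases "m = 0")
  case False
  interpret Aq scale Dl G B n q m c h e eps
    using False n2 q_prim kalg gen h_comm h_pow h_e grading h_deg e_deg B_indep B_span B_hom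
      B_ones B_ones_e coprod eps_lin eps_mult eps_one eps_h eps_e
    by unfold_locales (simp_all add: qq_def Aq_coproduct_def)
  have Gam: "Gam = Gamma" and Chi: "Chi = (\<lambda>j. chi (unitv j))"
    and Chi_inv: "Chi_inv = (\<lambda>i. chi (neg_unitv n i))"
    by (simp_all add: Gam_def Chi_def Chi_inv_def Gamma_def[abs_def] chi_def[abs_def] dual_basis_def)
  show ?thesis
  proof (intro allI impI conjI)
    fix i j assume i: "i < m" and j: "j < m"
    show "dual_coprod (Gam j) = (\<lambda>p. ftensor (Chi j) (Gam j) p + ftensor (Gam j) eps p)"
      using skew_derivation_Gamma[OF j]
      by (auto simp: Gam Chi dual_coprod_def ftensor_def skew_derivation_def)
    show "conv Dl (conv Dl (Chi i) (Gam j)) (Chi_inv i) = (\<lambda>x. (qq powi c j i * q powi (- c j i)) * Gam j x)"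
      using Gamma_conj[OF i j] by (simp add: Gam Chi Chi_inv qq_def)
  qed
qed simp

end
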